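(* Let $\{e^{t\mathcal{L}}\}_{t\ge0}$ be a quantum dynamical semigroup of unital quantum channels on $M_d$. The following are equivalent: (i) $e^{t\mathcal{L}}$ is mixed Weyl-unitary for every $t\ge0$; (ii) $\mathcal{L}$ is a non-negative linear combination of maps of the form $\mathrm{Ad}_W-\mathrm{id}$ with $W$ a Weyl unitary; (iii) $\mathcal{L}$ is Weyl-covariant.
   Context: Index the standard basis of $\mathbb{C}^d$ by $\mathbb{Z}_d$, let $\xi=e^{2\pi i/d}$, $Ue_j=e_{j+1}$, $Ve_j=\xi^je_j$, and Weyl unitaries $W_{a,b}=U^aV^b$, $a,b\in\mathbb{Z}_d$. $\mathrm{Ad}_W(X)=W^*XW$. A linear map $\Phi$ on $M_d$ is mixed Weyl-unitary if $\Phi(X)=\sum_i\lambda_iU_iXU_i^*$ with $\lambda_i\ge0$, $\sum_i\lambda_i=1$ and each $U_i$ a Weyl unitary; it is Weyl-covariant if $\Phi(W_{a,b}XW_{a,b}^* )=W_{a,b}\Phi(X)W_{a,b}^*$ for all $X\in M_d$ and $a,b\in\mathbb{Z}_d$. A quantum dynamical semigroup of unital quantum channels is a family $\{\Phi_t=e^{t\mathcal{L}}\}_{t\ge0}$ of completely positive, unital, trace-preserving maps with $\Phi_0=\mathrm{id}$, $\Phi_s\Phi_t=\Phi_{s+t}$, continuous in $t$; $\mathcal{L}$ is its generator. *)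

theory Defs
  imports "HOL-Analysis.Analysis" "Jordan_Normal_Form.Schur_Decomposition"
begin

(* Matrices in M_d are  complex mat  values in  carrier_mat d d;
   linear maps on M_d are functions  complex mat \<Rightarrow> complex mat,
   only their behaviour on carrier_mat d d matters. *)

definition mtrace :: "complex mat \<Rightarrow> complex" where
  "mtrace A = (\<Sum>i<dim_row A. A $$ (i,i))"

definition psd :: "nat \<Rightarrow> complex mat \<Rightarrow> bool" where
  "psd n A \<longleftrightarrow> A \<in> carrier_mat n n \<and>
     (\<forall>v :: nat \<Rightarrow> complex.
        Im (\<Sum>i<n. \<Sum>j<n. cnj (v i) * A $$ (i,j) * v j) = 0 \<and>
        0 \<le> Re (\<Sum>i<n. \<Sum>j<n. cnj (v i) * A $$ (i,j) * v j))"

definition linear_on_Md :: "nat \<Rightarrow> (complex mat \<Rightarrow> complex mat) \<Rightarrow> bool" where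
  "linear_on_Md d \<Phi> \<longleftrightarrow>
     (\<forall>X \<in> carrier_mat d d. \<Phi> X \<in> carrier_mat d d) \<and>
     (\<forall>X \<in> carrier_mat d d. \<forall>Y \<in> carrier_mat d d. \<Phi> (X + Y) = \<Phi> X + \<Phi> Y) \<and>
     (\<forall>c. \<forall>X \<in> carrier_mat d d. \<Phi> (c \<cdot>\<^sub>m X) = c \<cdot>\<^sub>m \<Phi> X)"

(* id_{M_n} \<otimes> \<Phi> applied to an element of M_n(M_d) = M_{nd} (block (p,q) is a d x d block) *)
definition ampliate :: "nat \<Rightarrow> nat \<Rightarrow> (complex mat \<Rightarrow> complex mat) \<Rightarrow> complex mat \<Rightarrow> complex mat" where
  "ampliate n d \<Phi> X = mat (n*d) (n*d) (\<lambda>(r,s).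
      \<Phi> (mat d d (\<lambda>(k,l). X $$ ((r div d) * d + k, (s div d) * d + l))) $$ (r mod d, s mod d))"

definition completely_positive :: "nat \<Rightarrow> (complex mat \<Rightarrow> complex mat) \<Rightarrow> bool" where
  "completely_positive d \<Phi> \<longleftrightarrow>
     (\<forall>n X. psd (n*d) X \<longrightarrow> psd (n*d) (ampliate n d \<Phi> X))"

definition unital_channel :: "nat \<Rightarrow> (complex mat \<Rightarrow> complex mat) \<Rightarrow> bool" where
  "unital_channel d \<Phi> \<longleftrightarrow> linear_on_Md d \<Phi> \<and> completely_positive d \<Phi> \<and>
     \<Phi> (1\<^sub>m d) = 1\<^sub>m d \<and> (\<forall>X \<in> carrier_mat d d. mtrace (\<Phi> X) = mtrace X)"

definition qds_unital :: "nat \<Rightarrow> (real \<Rightarrow> complex mat \<Rightarrow> complex mat) \<Rightarrow> bool" where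
  "qds_unital d \<Phi> \<longleftrightarrow>
     (\<forall>t\<ge>0. unital_channel d (\<Phi> t)) \<and>
     (\<forall>X \<in> carrier_mat d d. \<Phi> 0 X = X) \<and>
     (\<forall>s\<ge>0. \<forall>t\<ge>0. \<forall>X \<in> carrier_mat d d. \<Phi> s (\<Phi> t X) = \<Phi> (s + t) X) \<and>
     (\<forall>X \<in> carrier_mat d d. \<forall>i<d. \<forall>j<d. continuous_on {0..} (\<lambda>t. \<Phi> t X $$ (i,j)))"

(* L is the generator: L X = d/dt|_{t=0+} \<Phi>_t X (so that \<Phi>_t = e^{tL}) *)
definition generator :: "nat \<Rightarrow> (real \<Rightarrow> complex mat \<Rightarrow> complex mat) \<Rightarrow> (complex mat \<Rightarrow> complex mat) \<Rightarrow> bool" where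
  "generator d \<Phi> L \<longleftrightarrow>
     (\<forall>X \<in> carrier_mat d d. L X \<in> carrier_mat d d \<and>
        (\<forall>i<d. \<forall>j<d. ((\<lambda>t. \<Phi> t X $$ (i,j)) has_vector_derivative (L X $$ (i,j))) (at_right 0)))"

definition xi :: "nat \<Rightarrow> complex" where
  "xi d = cis (2 * pi / real d)"

definition shiftU :: "nat \<Rightarrow> complex mat" where
  "shiftU d = mat d d (\<lambda>(i,j). if i = (j + 1) mod d then 1 else 0)"

definition clockV :: "nat \<Rightarrow> complex mat" where
  "clockV d = mat d d (\<lambda>(i,j). if i = j then xi d ^ j else 0)"

definition weyl :: "nat \<Rightarrow> nat \<Rightarrow> nat \<Rightarrow> complex mat" where
  "weyl d a b = shiftU d ^\<^sub>m a * clockV d ^\<^sub>m b"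

definition Ad :: "complex mat \<Rightarrow> complex mat \<Rightarrow> complex mat" where
  "Ad W X = mat_adjoint W * X * W"

definition mixed_weyl_unitary :: "nat \<Rightarrow> (complex mat \<Rightarrow> complex mat) \<Rightarrow> bool" where
  "mixed_weyl_unitary d \<Phi> \<longleftrightarrow>
     (\<exists>(n::nat) (lam :: nat \<Rightarrow> real) (ab :: nat \<Rightarrow> nat \<times> nat).
        (\<forall>k<n. 0 \<le> lam k \<and> fst (ab k) < d \<and> snd (ab k) < d) \<and> (\<Sum>k<n. lam k) = 1 \<and>
        (\<forall>X \<in> carrier_mat d d. \<Phi> X = mat d d (\<lambda>(i,j). \<Sum>k<n. complex_of_real (lam k) *
            ((weyl d (fst (ab k)) (snd (ab k)) * X * mat_adjoint (weyl d (fst (ab k)) (snd (ab k)))) $$ (i,j)))))"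

definition nonneg_comb_Ad_minus_id :: "nat \<Rightarrow> (complex mat \<Rightarrow> complex mat) \<Rightarrow> bool" where
  "nonneg_comb_Ad_minus_id d L \<longleftrightarrow>
     (\<exists>(n::nat) (c :: nat \<Rightarrow> real) (ab :: nat \<Rightarrow> nat \<times> nat).
        (\<forall>k<n. 0 \<le> c k \<and> fst (ab k) < d \<and> snd (ab k) < d) \<and>
        (\<forall>X \<in> carrier_mat d d. L X = mat d d (\<lambda>(i,j). \<Sum>k<n. complex_of_real (c k) *
            ((Ad (weyl d (fst (ab k)) (snd (ab k))) X - X) $$ (i,j)))))"

definition weyl_covariant :: "nat \<Rightarrow> (complex mat \<Rightarrow> complex mat) \<Rightarrow> bool" where
  "weyl_covariant d \<Phi> \<longleftrightarrow>
     (\<forall>a<d. \<forall>b<d. \<forall>X \<in> carrier_mat d d.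
        \<Phi> (weyl d a b * X * mat_adjoint (weyl d a b)) = weyl d a b * \<Phi> X * mat_adjoint (weyl d a b))"

end

theory Submission
  imports Defs "HOL-Library.Real_Mod"
begin

(* Conjugation by the Weyl unitary W_{a,b} shifts both indices of a matrix by a and multiplies
   the entry (r,s) by the phase xi^(b(r-s)).  A linear map commuting with all these conjugations
   therefore only relates entries with the same index difference, and a discrete Fourier transform
   in the phase writes it as d^2 Psi = sum_{c,e} chi(c,e) W_{c,e} (.) W_{c,e}^*, where chi(c,e) is
   the Choi form of Psi evaluated at sum_p xi^(ep) e_p (x) e_(p+c).  For a unital completely
   positive map the chi(c,e) are nonnegative and sum to d^2, so covariant channels are exactly the
   mixed Weyl-unitary ones.

   For the semigroup, covariance of L and of all e^(tL) are equivalent: the derivative of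
   s |-> e^((t-s)L) W e^(sL)(X) W^* vanishes when L commutes with W (.) W^*.  The coefficients of L
   are the limits of chi(e^(hL))/h away from (c,e) = (0,0), where chi(id) vanishes, hence they are
   nonnegative; since L 1 = 0 they sum to zero, which turns the expansion of L into a nonnegative
   combination of the maps Ad_W - id. *)

section \<open>Roots of unity and residues\<close>

definition unity_root :: "nat \<Rightarrow> int \<Rightarrow> complex" where
  "unity_root d n = cis (2 * pi * of_int n / real d)"

lemma unity_root_add: "unity_root d (m + n) = unity_root d m * unity_root d n"
  by (simp add: unity_root_def cis_mult add_divide_distrib algebra_simps)

lemma unity_root_0 [simp]: "unity_root d 0 = 1"
  by (simp add: unity_root_def)

lemma unity_root_nonzero [simp]: "unity_root d n \<noteq> 0"
  by (simp add: unity_root_def)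

lemma cnj_unity_root: "cnj (unity_root d n) = unity_root d (- n)"
  by (simp add: unity_root_def cis_cnj)

lemma unity_root_diff: "unity_root d (m - n) = unity_root d m * cnj (unity_root d n)"
  using unity_root_add[of d m "- n"] by (simp add: cnj_unity_root)

lemma unity_root_power: "unity_root d n ^ k = unity_root d (int k * n)"
  by (induct k) (auto simp: unity_root_add distrib_right)

lemma xi_power: "xi d ^ k = unity_root d (int k)"
  by (simp add: xi_def unity_root_def Complex.DeMoivre field_simps)

lemma unity_root_eq_1_iff:
  assumes "0 < d" shows "unity_root d n = 1 \<longleftrightarrow> int d dvd n"
proof -
  have "unity_root d n = 1 \<longleftrightarrow> (\<exists>k. 2 * pi * of_int n / real d = of_int k * (2 * pi))"
    by (simp add: unity_root_def cis_eq_1_iff)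
  also have "\<dots> \<longleftrightarrow> (\<exists>k. n = k * int d)"
  proof -
    have "2 * pi * of_int n / real d = of_int k * (2 * pi) \<longleftrightarrow> n = k * int d" for k
    proof -
      have "2 * pi * of_int n / real d = of_int k * (2 * pi) \<longleftrightarrow> real_of_int n = of_int k * real d"
        using assms by (simp add: field_simps)
      also have "\<dots> \<longleftrightarrow> n = k * int d"
        by (metis of_int_eq_iff of_int_mult of_int_of_nat_eq)
      finally show ?thesis .
    qed
    then show ?thesis by simp
  qed
  also have "\<dots> \<longleftrightarrow> int d dvd n"
    by (auto simp: dvd_def mult.commute)
  finally show ?thesis .
qed

lemma unity_root_eq_iff:
  assumes "0 < d" shows "unity_root d m = unity_root d n \<longleftrightarrow> m mod int d = n mod int d"
proof -
  have "unity_root d m = unity_root d (m - n) * unity_root d n"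
    by (simp flip: unity_root_add)
  then have "unity_root d m = unity_root d n \<longleftrightarrow> unity_root d (m - n) = 1"
    by auto
  also have "\<dots> \<longleftrightarrow> m mod int d = n mod int d"
    using assms by (simp add: unity_root_eq_1_iff mod_eq_dvd_iff)
  finally show ?thesis .
qed

lemma unity_root_mult_cong:
  assumes "0 < d" and "x mod int d = y mod int d"
  shows "unity_root d (b * x) = unity_root d (b * y)"
proof -
  have "(b * x) mod int d = (b * y) mod int d"
    using assms(2) by (metis mod_mult_right_eq)
  then show ?thesis
    using assms(1) by (simp add: unity_root_eq_iff)
qed

lemma unity_root_sum:
  assumes "0 < d"
  shows "(\<Sum>e<d. unity_root d (int e * m)) = (if int d dvd m then of_nat d else 0)"
proof -
  have sum_eq: "(\<Sum>e<d. unity_root d (int e * m)) = (\<Sum>e<d. unity_root d m ^ e)"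
    by (simp add: unity_root_power)
  show ?thesis
  proof (cases "int d dvd m")
    case True
    then have "unity_root d m = 1"
      using assms by (simp add: unity_root_eq_1_iff)
    then show ?thesis
      using True by (simp add: sum_eq)
  next
    case False
    have "unity_root d m ^ d = 1"
      using assms by (simp add: unity_root_power unity_root_eq_1_iff)
    then show ?thesis
      using assms False by (simp add: sum_eq unity_root_eq_1_iff geometric_sum)
  qed
qed

definition residue :: "nat \<Rightarrow> int \<Rightarrow> nat" where
  "residue d i = nat (i mod int d)"

lemma residue_less [simp]: "0 < d \<Longrightarrow> residue d i < d"
  by (simp add: residue_def nat_less_iff)

lemma of_nat_residue: "0 < d \<Longrightarrow> int (residue d i) = i mod int d"
  by (simp add: residue_def)

lemma residue_of_nat [simp]: "j < d \<Longrightarrow> residue d (int j) = j"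
  by (simp add: residue_def)

lemma residue_eq_iff: "0 < d \<Longrightarrow> residue d i = residue d j \<longleftrightarrow> i mod int d = j mod int d"
  by (simp add: residue_def nat_eq_iff)

lemma residue_eq_nat_iff: "j < d \<Longrightarrow> residue d i = j \<longleftrightarrow> i mod int d = int j"
  by (auto simp: residue_def)

lemma residue_diff_residue_diff:
  assumes "0 < d" "c < d"
  shows "residue d (int r - int (residue d (int r - int c))) = c"
  using assms by (simp add: residue_eq_nat_iff of_nat_residue mod_diff_right_eq)

lemma sum_residue_diff_reindex:
  assumes "0 < d"
  shows "(\<Sum>c<d. g (residue d (int r - int c))) = (\<Sum>k<d. g k)"
  by (rule sum.reindex_bij_witness[where i = "\<lambda>k. residue d (int r - int k)" and j = "\<lambda>c. residue d (int r - int c)"])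
     (use assms in \<open>auto simp: residue_diff_residue_diff\<close>)

lemma nat_less_dvd_diff_iff:
  fixes c c' :: nat
  assumes "c < d" "c' < d"
  shows "int d dvd (int c' - int c) \<longleftrightarrow> c' = c"
proof
  assume "int d dvd (int c' - int c)"
  then have "int c' mod int d = int c mod int d"
    by (simp add: mod_eq_dvd_iff)
  then show "c' = c"
    using assms by (simp flip: zmod_int)
qed simp

lemma sum_lessThan_mult_split:
  fixes n d :: nat
  shows "(\<Sum>i<n * d. f i) = (\<Sum>p<n. \<Sum>k<d. f (p * d + k))"
proof -
  have "sum f {p * d..<p * d + d} = (\<Sum>k<d. f (p * d + k))" for p
    using sum.shift_bounds_nat_ivl[of f 0 "p * d" d] by (simp add: atLeast0LessThan add.commute)
  then show ?thesis
    by (simp add: sum.nat_group[symmetric])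
qed

lemma sum_lessThan_square_div_mod:
  fixes d :: nat
  shows "(\<Sum>k<d * d. f (k div d) (k mod d)) = (\<Sum>p<d. \<Sum>q<d. f p q)"
proof -
  have "(p * d + q) div d = p" "(p * d + q) mod d = q" if "q < d" for p q
    using that by (simp_all add: add.commute[of "p * d"])
  then show ?thesis
    by (simp add: sum_lessThan_mult_split)
qed

section \<open>Conjugation by Weyl unitaries\<close>

lemma index_mult_mat_sum:
  "A \<in> carrier_mat n m \<Longrightarrow> B \<in> carrier_mat m p \<Longrightarrow> i < n \<Longrightarrow> j < p \<Longrightarrow>
   (A * B) $$ (i,j) = (\<Sum>k<m. A $$ (i,k) * B $$ (k,j))"
  by (auto simp: scalar_prod_def atLeast0LessThan intro!: sum.cong)

lemma dim_mat_adjoint [simp]: "dim_row (mat_adjoint A) = dim_col A" "dim_col (mat_adjoint A) = dim_row A"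
  by (simp_all add: mat_adjoint_def mat_of_rows_def)

lemma mat_adjoint_carrier [simp]: "A \<in> carrier_mat n m \<Longrightarrow> mat_adjoint A \<in> carrier_mat m n"
  by (metis carrier_matD carrier_matI dim_mat_adjoint)

lemma index_mat_adjoint [simp]:
  "i < dim_col A \<Longrightarrow> j < dim_row A \<Longrightarrow> mat_adjoint A $$ (i,j) = cnj (A $$ (j,i))"
  by (simp add: mat_adjoint_def mat_of_rows_def)

locale monomial_mat =
  fixes d :: nat and M :: "complex mat" and \<sigma> \<tau> :: "nat \<Rightarrow> nat" and \<phi> :: "nat \<Rightarrow> complex"
  assumes carrier: "M \<in> carrier_mat d d"
    and entry: "\<And>i j. i < d \<Longrightarrow> j < d \<Longrightarrow> M $$ (i,j) = (if i = \<sigma> j then \<phi> j else 0)"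
    and perm: "\<And>i. i < d \<Longrightarrow> \<sigma> i < d" "\<And>r. r < d \<Longrightarrow> \<tau> r < d"
    and inverse: "\<And>i r. i < d \<Longrightarrow> r < d \<Longrightarrow> r = \<sigma> i \<longleftrightarrow> i = \<tau> r"
begin

lemma conj_entry:
  assumes X: "X \<in> carrier_mat d d" and r: "r < d" and s: "s < d"
  shows "(M * X * mat_adjoint M) $$ (r,s) = \<phi> (\<tau> r) * cnj (\<phi> (\<tau> s)) * X $$ (\<tau> r, \<tau> s)"
proof -
  have MX: "(M * X) $$ (r,j) = \<phi> (\<tau> r) * X $$ (\<tau> r, j)" if j: "j < d" for j
  proof -
    have "(M * X) $$ (r,j) = (\<Sum>i<d. M $$ (r,i) * X $$ (i,j))"
      using carrier X r j by (rule index_mult_mat_sum)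
    also have "\<dots> = (\<Sum>i<d. if i = \<tau> r then \<phi> i * X $$ (i,j) else 0)"
      using r by (intro sum.cong) (auto simp: entry inverse)
    also have "\<dots> = \<phi> (\<tau> r) * X $$ (\<tau> r, j)"
      using perm r by simp
    finally show ?thesis .
  qed
  have "(M * X * mat_adjoint M) $$ (r,s) = (\<Sum>j<d. (M * X) $$ (r,j) * mat_adjoint M $$ (j,s))"
    using carrier X r s by (intro index_mult_mat_sum[of _ d d]) auto
  also have "\<dots> = (\<Sum>j<d. if j = \<tau> s then (M * X) $$ (r,j) * cnj (\<phi> j) else 0)"
    using carrier s by (intro sum.cong) (auto simp: entry inverse)
  also have "\<dots> = \<phi> (\<tau> r) * cnj (\<phi> (\<tau> s)) * X $$ (\<tau> r, \<tau> s)"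
    using perm s by (simp add: MX)
  finally show ?thesis .
qed

lemma adjoint_conj_entry:
  assumes X: "X \<in> carrier_mat d d" and r: "r < d" and s: "s < d"
  shows "(mat_adjoint M * X * M) $$ (r,s) = cnj (\<phi> r) * \<phi> s * X $$ (\<sigma> r, \<sigma> s)"
proof -
  have MX: "(mat_adjoint M * X) $$ (r,j) = cnj (\<phi> r) * X $$ (\<sigma> r, j)" if j: "j < d" for j
  proof -
    have "(mat_adjoint M * X) $$ (r,j) = (\<Sum>i<d. mat_adjoint M $$ (r,i) * X $$ (i,j))"
      using carrier X r j by (intro index_mult_mat_sum[of _ d d]) auto
    also have "\<dots> = (\<Sum>i<d. if i = \<sigma> r then cnj (\<phi> r) * X $$ (i,j) else 0)"
      using carrier r by (intro sum.cong) (auto simp: entry)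
    also have "\<dots> = cnj (\<phi> r) * X $$ (\<sigma> r, j)"
      using perm r by simp
    finally show ?thesis .
  qed
  have "(mat_adjoint M * X * M) $$ (r,s) = (\<Sum>j<d. (mat_adjoint M * X) $$ (r,j) * M $$ (j,s))"
    using carrier X r s by (intro index_mult_mat_sum[of _ d d] mult_carrier_mat[of _ d d]) auto
  also have "\<dots> = (\<Sum>j<d. if j = \<sigma> s then (mat_adjoint M * X) $$ (r,j) * \<phi> s else 0)"
    using s by (intro sum.cong) (auto simp: entry)
  also have "\<dots> = cnj (\<phi> r) * \<phi> s * X $$ (\<sigma> r, \<sigma> s)"
    using perm s by (simp add: MX)
  finally show ?thesis .
qed

end

lemma residue_add_eq_iff:
  assumes "0 < d" "i < d" "r < d"
  shows "r = residue d (int i + a) \<longleftrightarrow> i = residue d (int r - a)"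
proof -
  have "r = residue d (int i + a) \<longleftrightarrow> (int i + a) mod int d = int r mod int d"
    using assms by (metis residue_eq_iff residue_of_nat)
  also have "\<dots> \<longleftrightarrow> (int r - a) mod int d = int i mod int d"
    by (simp add: mod_eq_dvd_iff dvd_diff_commute algebra_simps)
  also have "\<dots> \<longleftrightarrow> i = residue d (int r - a)"
    using assms by (metis residue_eq_iff residue_of_nat)
  finally show ?thesis .
qed

lemma dim_shiftU [simp]: "dim_row (shiftU d) = d" "dim_col (shiftU d) = d"
  by (simp_all add: shiftU_def)

lemma dim_clockV [simp]: "dim_row (clockV d) = d" "dim_col (clockV d) = d"
  by (simp_all add: clockV_def)

lemma shiftU_carrier [simp]: "shiftU d \<in> carrier_mat d d"
  by (simp add: carrier_matI)

lemma clockV_carrier [simp]: "clockV d \<in> carrier_mat d d"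
  by (simp add: carrier_matI)

lemma dim_weyl [simp]: "dim_row (weyl d a b) = d" "dim_col (weyl d a b) = d"
  by (simp_all add: weyl_def)

lemma weyl_carrier [simp]: "weyl d a b \<in> carrier_mat d d"
  by (simp add: carrier_matI)

lemma index_shiftU_pow:
  assumes "0 < d" "i < d" "j < d"
  shows "(shiftU d ^\<^sub>m a) $$ (i,j) = (if i = residue d (int j + int a) then 1 else 0)"
  using assms(2,3)
proof (induct a arbitrary: j)
  case 0
  then show ?case by simp
next
  case (Suc a)
  have "(shiftU d ^\<^sub>m Suc a) $$ (i,j) = (shiftU d ^\<^sub>m a * shiftU d) $$ (i,j)"
    by simp
  also have "\<dots> = (\<Sum>k<d. (shiftU d ^\<^sub>m a) $$ (i,k) * shiftU d $$ (k,j))"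
    using Suc.prems by (intro index_mult_mat_sum[of _ d d]) (auto intro: pow_carrier_mat)
  also have "\<dots> = (\<Sum>k<d. if k = (j + 1) mod d then (shiftU d ^\<^sub>m a) $$ (i,k) else 0)"
    using Suc.prems by (intro sum.cong) (auto simp: shiftU_def)
  also have "\<dots> = (shiftU d ^\<^sub>m a) $$ (i, (j + 1) mod d)"
    using assms(1) by simp
  also have "\<dots> = (if i = residue d (int ((j + 1) mod d) + int a) then 1 else 0)"
    using Suc assms(1) by simp
  also have "residue d (int ((j + 1) mod d) + int a) = residue d (int j + int (Suc a))"
    using assms(1) by (simp add: residue_eq_iff zmod_int mod_simps add_ac)
  finally show ?case .
qed

lemma index_clockV_pow:
  assumes "i < d" "j < d"
  shows "(clockV d ^\<^sub>m b) $$ (i,j) = (if i = j then unity_root d (int j * int b) else 0)"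
  using assms
proof (induct b arbitrary: j)
  case 0
  then show ?case by simp
next
  case (Suc b)
  have "(clockV d ^\<^sub>m Suc b) $$ (i,j) = (clockV d ^\<^sub>m b * clockV d) $$ (i,j)"
    by simp
  also have "\<dots> = (\<Sum>k<d. (clockV d ^\<^sub>m b) $$ (i,k) * clockV d $$ (k,j))"
    using Suc.prems by (intro index_mult_mat_sum[of _ d d]) (auto intro: pow_carrier_mat)
  also have "\<dots> = (\<Sum>k<d. if k = j then (clockV d ^\<^sub>m b) $$ (i,j) * unity_root d (int j) else 0)"
    using Suc.prems by (intro sum.cong) (auto simp: clockV_def xi_power)
  also have "\<dots> = (if i = j then unity_root d (int j * int (Suc b)) else 0)"
    using Suc by (simp add: algebra_simps flip: unity_root_add)
  finally show ?case .
qed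

lemma index_weyl:
  assumes "0 < d" "i < d" "j < d"
  shows "weyl d a b $$ (i,j) = (if i = residue d (int j + int a) then unity_root d (int j * int b) else 0)"
proof -
  have "weyl d a b $$ (i,j) = (\<Sum>k<d. (shiftU d ^\<^sub>m a) $$ (i,k) * (clockV d ^\<^sub>m b) $$ (k,j))"
    using assms unfolding weyl_def by (intro index_mult_mat_sum[of _ d d]) auto
  also have "\<dots> = (\<Sum>k<d. if k = j then (shiftU d ^\<^sub>m a) $$ (i,j) * unity_root d (int j * int b) else 0)"
    using assms by (intro sum.cong) (auto simp: index_clockV_pow)
  finally show ?thesis
    using assms by (simp add: index_shiftU_pow)
qed

lemma monomial_mat_weyl:
  assumes "0 < d"
  shows "monomial_mat d (weyl d a b) (\<lambda>j. residue d (int j + int a)) (\<lambda>r. residue d (int r - int a))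
           (\<lambda>j. unity_root d (int j * int b))"
  using assms by unfold_locales (simp_all add: index_weyl residue_add_eq_iff)

definition weyl_conj :: "nat \<Rightarrow> int \<Rightarrow> int \<Rightarrow> complex mat \<Rightarrow> complex mat" where
  "weyl_conj d a b X = mat d d (\<lambda>(r,s).
     unity_root d (b * (int r - int s)) * X $$ (residue d (int r - a), residue d (int s - a)))"

lemma dim_weyl_conj [simp]: "dim_row (weyl_conj d a b X) = d" "dim_col (weyl_conj d a b X) = d"
  by (simp_all add: weyl_conj_def)

lemma weyl_conj_carrier [simp]: "weyl_conj d a b X \<in> carrier_mat d d"
  by (simp add: carrier_matI)

lemma index_weyl_conj [simp]:
  "r < d \<Longrightarrow> s < d \<Longrightarrow>
   weyl_conj d a b X $$ (r,s) = unity_root d (b * (int r - int s)) * X $$ (residue d (int r - a), residue d (int s - a))"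
  by (simp add: weyl_conj_def)

lemma weyl_mult_adjoint:
  assumes d: "0 < d" and X: "X \<in> carrier_mat d d"
  shows "weyl d a b * X * mat_adjoint (weyl d a b) = weyl_conj d (int a) (int b) X"
proof (rule eq_matI)
  fix r s assume "r < dim_row (weyl_conj d (int a) (int b) X)" "s < dim_col (weyl_conj d (int a) (int b) X)"
  then have r: "r < d" and s: "s < d" by auto
  let ?r = "residue d (int r - int a)" and ?s = "residue d (int s - int a)"
  have "(int ?r - int ?s) mod int d = (int r - int s) mod int d"
    using d by (simp add: of_nat_residue mod_diff_eq)
  then have "unity_root d (int b * (int ?r - int ?s)) = unity_root d (int b * (int r - int s))"
    by (rule unity_root_mult_cong[OF d])
  then have "unity_root d (int ?r * int b) * cnj (unity_root d (int ?s * int b)) = unity_root d (int b * (int r - int s))"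
    by (simp add: algebra_simps flip: unity_root_diff)
  then show "(weyl d a b * X * mat_adjoint (weyl d a b)) $$ (r,s) = weyl_conj d (int a) (int b) X $$ (r,s)"
    using monomial_mat.conj_entry[OF monomial_mat_weyl[OF d] X r s] r s by simp
qed (use X in auto)

lemma Ad_weyl:
  assumes d: "0 < d" and X: "X \<in> carrier_mat d d"
  shows "Ad (weyl d a b) X = weyl_conj d (- int a) (- int b) X"
proof (rule eq_matI)
  fix r s assume "r < dim_row (weyl_conj d (- int a) (- int b) X)" "s < dim_col (weyl_conj d (- int a) (- int b) X)"
  then have r: "r < d" and s: "s < d" by auto
  have "cnj (unity_root d (int r * int b)) * unity_root d (int s * int b) = unity_root d (- int b * (int r - int s))"
    by (simp add: cnj_unity_root algebra_simps flip: unity_root_add)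
  then show "Ad (weyl d a b) X $$ (r,s) = weyl_conj d (- int a) (- int b) X $$ (r,s)"
    using monomial_mat.adjoint_conj_entry[OF monomial_mat_weyl[OF d] X r s] r s by (simp add: Ad_def)
qed (use X in \<open>auto simp: Ad_def\<close>)

lemma weyl_conj_weyl_conj:
  assumes d: "0 < d"
  shows "weyl_conj d a b (weyl_conj d c e X) = weyl_conj d (a + c) (b + e) X"
proof (rule eq_matI)
  fix r s assume "r < dim_row (weyl_conj d (a + c) (b + e) X)" "s < dim_col (weyl_conj d (a + c) (b + e) X)"
  then have r: "r < d" and s: "s < d" by auto
  let ?r = "residue d (int r - a)" and ?s = "residue d (int s - a)"
  have "(int ?r - int ?s) mod int d = (int r - int s) mod int d"
    using d by (simp add: of_nat_residue mod_diff_eq)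
  then have "unity_root d (e * (int ?r - int ?s)) = unity_root d (e * (int r - int s))"
    by (rule unity_root_mult_cong[OF d])
  moreover have "residue d (int ?r - c) = residue d (int r - (a + c))" "residue d (int ?s - c) = residue d (int s - (a + c))"
    using d by (simp_all add: residue_eq_iff of_nat_residue mod_diff_left_eq algebra_simps)
  ultimately show "weyl_conj d a b (weyl_conj d c e X) $$ (r,s) = weyl_conj d (a + c) (b + e) X $$ (r,s)"
    using d r s by (simp add: algebra_simps flip: unity_root_add)
qed auto

lemma weyl_conj_cong:
  assumes d: "0 < d" and "a mod int d = a' mod int d" "b mod int d = b' mod int d"
  shows "weyl_conj d a b X = weyl_conj d a' b' X"
proof (rule eq_matI)
  fix r s assume "r < dim_row (weyl_conj d a' b' X)" "s < dim_col (weyl_conj d a' b' X)"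
  then have r: "r < d" and s: "s < d" by auto
  have "unity_root d ((int r - int s) * b) = unity_root d ((int r - int s) * b')"
    using assms by (intro unity_root_mult_cong) auto
  moreover have "residue d (int r - a) = residue d (int r - a')" "residue d (int s - a) = residue d (int s - a')"
    using assms by (simp_all add: residue_eq_iff) (metis mod_diff_right_eq)+
  ultimately show "weyl_conj d a b X $$ (r,s) = weyl_conj d a' b' X $$ (r,s)"
    using r s by (simp add: mult.commute)
qed auto

lemma weyl_conj_0_0 [simp]: "X \<in> carrier_mat d d \<Longrightarrow> weyl_conj d 0 0 X = X"
  by (rule eq_matI) auto

lemma weyl_conj_one_mat [simp]:
  assumes d: "0 < d"
  shows "weyl_conj d a b (1\<^sub>m d) = 1\<^sub>m d"
proof (rule eq_matI)
  fix r s assume "r < dim_row (1\<^sub>m d :: complex mat)" "s < dim_col (1\<^sub>m d :: complex mat)"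
  then have r: "r < d" and s: "s < d" by auto
  have "residue d (int r - a) = residue d (int s - a) \<longleftrightarrow> int d dvd (int r - int s)"
    using d by (simp add: residue_eq_iff mod_eq_dvd_iff)
  also have "\<dots> \<longleftrightarrow> r = s"
    by (rule nat_less_dvd_diff_iff[OF s r])
  finally have "residue d (int r - a) = residue d (int s - a) \<longleftrightarrow> r = s" .
  then show "weyl_conj d a b (1\<^sub>m d) $$ (r,s) = 1\<^sub>m d $$ (r,s)"
    using d r s by simp
qed auto

lemma linear_weyl_conj: "linear_on_Md d (weyl_conj d a b)"
  unfolding linear_on_Md_def by (auto intro!: eq_matI simp: algebra_simps)

definition mat_unit :: "nat \<Rightarrow> nat \<Rightarrow> nat \<Rightarrow> complex mat" where
  "mat_unit d p q = mat d d (\<lambda>(i,j). if i = p \<and> j = q then 1 else 0)"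

lemma dim_mat_unit [simp]: "dim_row (mat_unit d p q) = d" "dim_col (mat_unit d p q) = d"
  by (simp_all add: mat_unit_def)

lemma mat_unit_carrier [simp]: "mat_unit d p q \<in> carrier_mat d d"
  by (simp add: carrier_matI)

lemma index_mat_unit [simp]:
  "i < d \<Longrightarrow> j < d \<Longrightarrow> mat_unit d p q $$ (i,j) = (if i = p \<and> j = q then 1 else 0)"
  by (simp add: mat_unit_def)

lemma linear_on_Md_carrier: "linear_on_Md d \<Psi> \<Longrightarrow> X \<in> carrier_mat d d \<Longrightarrow> \<Psi> X \<in> carrier_mat d d"
  by (simp add: linear_on_Md_def)

lemma linear_on_Md_add:
  "linear_on_Md d \<Psi> \<Longrightarrow> X \<in> carrier_mat d d \<Longrightarrow> Y \<in> carrier_mat d d \<Longrightarrow> \<Psi> (X + Y) = \<Psi> X + \<Psi> Y"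
  by (simp add: linear_on_Md_def)

lemma linear_on_Md_smult:
  "linear_on_Md d \<Psi> \<Longrightarrow> X \<in> carrier_mat d d \<Longrightarrow> \<Psi> (c \<cdot>\<^sub>m X) = c \<cdot>\<^sub>m \<Psi> X"
  by (simp add: linear_on_Md_def)

lemma linear_on_Md_id: "linear_on_Md d (\<lambda>X. X)"
  by (simp add: linear_on_Md_def)

lemma linear_on_Md_comp:
  "linear_on_Md d \<Psi> \<Longrightarrow> linear_on_Md d \<Theta> \<Longrightarrow> linear_on_Md d (\<lambda>X. \<Psi> (\<Theta> X))"
  unfolding linear_on_Md_def by auto

lemma linear_on_Md_zero:
  assumes "linear_on_Md d \<Psi>"
  shows "\<Psi> (0\<^sub>m d d) = 0\<^sub>m d d"
proof -
  have "\<Psi> (0 \<cdot>\<^sub>m 0\<^sub>m d d) = 0 \<cdot>\<^sub>m \<Psi> (0\<^sub>m d d)"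
    by (rule linear_on_Md_smult[OF assms zero_carrier_mat])
  moreover have "0 \<cdot>\<^sub>m (0\<^sub>m d d :: complex mat) = 0\<^sub>m d d"
    by (intro eq_matI) auto
  moreover have "0 \<cdot>\<^sub>m \<Psi> (0\<^sub>m d d) = 0\<^sub>m d d"
    using linear_on_Md_carrier[OF assms zero_carrier_mat] by (intro eq_matI) auto
  ultimately show ?thesis
    by simp
qed

lemma linear_on_Md_expand_restricted:
  assumes \<Psi>: "linear_on_Md d \<Psi>" and i: "i < d" and j: "j < d"
    and S: "finite S" "S \<subseteq> {..<d} \<times> {..<d}"
  shows "\<Psi> (mat d d (\<lambda>kl. if kl \<in> S then X $$ kl else 0)) $$ (i,j)
        = (\<Sum>(k,l)\<in>S. X $$ (k,l) * \<Psi> (mat_unit d k l) $$ (i,j))"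
  using S
proof (induct S rule: finite_induct)
  case empty
  have zero: "mat d d (\<lambda>kl. if kl \<in> {} then X $$ kl else 0) = 0\<^sub>m d d"
    by (rule eq_matI) auto
  show ?case
    unfolding zero using \<Psi> i j by (simp add: linear_on_Md_zero)
next
  case (insert kl S)
  obtain k l where kl: "kl = (k,l)" by force
  let ?R = "\<lambda>S. mat d d (\<lambda>kl. if kl \<in> S then X $$ kl else 0)"
  have "?R (insert kl S) = ?R S + X $$ (k,l) \<cdot>\<^sub>m mat_unit d k l"
    using insert(2) kl by (intro eq_matI) auto
  then have "\<Psi> (?R (insert kl S)) = \<Psi> (?R S) + X $$ (k,l) \<cdot>\<^sub>m \<Psi> (mat_unit d k l)"
    using \<Psi> by (simp add: linear_on_Md_add linear_on_Md_smult)
  then have step: "\<Psi> (?R (insert kl S)) $$ (i,j) = \<Psi> (?R S) $$ (i,j) + X $$ (k,l) * \<Psi> (mat_unit d k l) $$ (i,j)"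
    using linear_on_Md_carrier[OF \<Psi>, of "?R S"] linear_on_Md_carrier[OF \<Psi>, of "mat_unit d k l"] i j
    by simp
  have IH: "\<Psi> (?R S) $$ (i,j) = (\<Sum>(k,l)\<in>S. X $$ (k,l) * \<Psi> (mat_unit d k l) $$ (i,j))"
    using insert by auto
  have "(\<Sum>(k,l)\<in>insert kl S. X $$ (k,l) * \<Psi> (mat_unit d k l) $$ (i,j))
      = X $$ (k,l) * \<Psi> (mat_unit d k l) $$ (i,j) + (\<Sum>(k,l)\<in>S. X $$ (k,l) * \<Psi> (mat_unit d k l) $$ (i,j))"
    using insert.hyps(1,2) kl by simp
  then show ?case
    by (simp only: step IH add.commute)
qed

lemma linear_on_Md_expand:
  assumes "linear_on_Md d \<Psi>" and X: "X \<in> carrier_mat d d" and "i < d" "j < d"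
  shows "\<Psi> X $$ (i,j) = (\<Sum>k<d. \<Sum>l<d. X $$ (k,l) * \<Psi> (mat_unit d k l) $$ (i,j))"
proof -
  have "mat d d (\<lambda>kl. if kl \<in> {..<d} \<times> {..<d} then X $$ kl else 0) = X"
    using X by (intro eq_matI) auto
  then show ?thesis
    using linear_on_Md_expand_restricted[OF assms(1,3,4), of "{..<d} \<times> {..<d}" X]
    by (simp add: sum.cartesian_product)
qed

section \<open>Weyl-covariant maps\<close>

lemma smult_one_mat [simp]: "(1 :: 'a :: monoid_mult) \<cdot>\<^sub>m A = A"
  by (rule eq_matI) auto

definition commutes_on :: "nat \<Rightarrow> (complex mat \<Rightarrow> complex mat) \<Rightarrow> (complex mat \<Rightarrow> complex mat) \<Rightarrow> bool" where
  "commutes_on d \<Psi> T \<longleftrightarrow> (\<forall>X\<in>carrier_mat d d. \<Psi> (T X) = T (\<Psi> X))"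

definition weyl_conj_covariant :: "nat \<Rightarrow> (complex mat \<Rightarrow> complex mat) \<Rightarrow> bool" where
  "weyl_conj_covariant d \<Psi> \<longleftrightarrow> (\<forall>a b. commutes_on d \<Psi> (weyl_conj d a b))"

lemma weyl_covariant_iff_weyl_conj_covariant:
  assumes d: "0 < d" and carrier: "\<And>X. X \<in> carrier_mat d d \<Longrightarrow> \<Psi> X \<in> carrier_mat d d"
  shows "weyl_covariant d \<Psi> \<longleftrightarrow> weyl_conj_covariant d \<Psi>"
proof
  assume covariant: "weyl_covariant d \<Psi>"
  show "weyl_conj_covariant d \<Psi>"
    unfolding weyl_conj_covariant_def commutes_on_def
  proof (intro allI ballI)
    fix a b and X :: "complex mat" assume X: "X \<in> carrier_mat d d"
    let ?a = "residue d a" and ?b = "residue d b"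
    have conj: "weyl_conj d a b Y = weyl d ?a ?b * Y * mat_adjoint (weyl d ?a ?b)" if "Y \<in> carrier_mat d d" for Y
      using d that by (simp add: weyl_mult_adjoint of_nat_residue weyl_conj_cong[of d a "int ?a" b "int ?b"])
    show "\<Psi> (weyl_conj d a b X) = weyl_conj d a b (\<Psi> X)"
      using covariant X carrier d unfolding weyl_covariant_def by (simp add: conj)
  qed
next
  assume "weyl_conj_covariant d \<Psi>"
  then show "weyl_covariant d \<Psi>"
    using d carrier unfolding weyl_covariant_def weyl_conj_covariant_def commutes_on_def
    by (simp add: weyl_mult_adjoint)
qed

lemma weyl_conj_covariant_sum:
  assumes d: "0 < d"
    and \<Psi>: "\<And>X. X \<in> carrier_mat d d \<Longrightarrow>
      \<Psi> X = mat d d (\<lambda>(i,j). \<Sum>k<n. w k * (weyl_conj d (a k) (b k) X $$ (i,j) - \<beta> * X $$ (i,j)))"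
  shows "weyl_conj_covariant d \<Psi>"
  unfolding weyl_conj_covariant_def commutes_on_def
proof (intro allI ballI)
  fix a0 b0 and X :: "complex mat" assume X: "X \<in> carrier_mat d d"
  show "\<Psi> (weyl_conj d a0 b0 X) = weyl_conj d a0 b0 (\<Psi> X)"
  proof (rule eq_matI)
    fix r s assume "r < dim_row (weyl_conj d a0 b0 (\<Psi> X))" "s < dim_col (weyl_conj d a0 b0 (\<Psi> X))"
    then have r: "r < d" and s: "s < d" by auto
    let ?r = "residue d (int r - a0)" and ?s = "residue d (int s - a0)"
    let ?\<omega> = "unity_root d (b0 * (int r - int s))"
    have commute: "weyl_conj d (a k) (b k) (weyl_conj d a0 b0 X) = weyl_conj d a0 b0 (weyl_conj d (a k) (b k) X)" for k
      using d by (simp add: weyl_conj_weyl_conj add.commute)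
    have "\<Psi> (weyl_conj d a0 b0 X) $$ (r,s)
        = (\<Sum>k<n. w k * (?\<omega> * weyl_conj d (a k) (b k) X $$ (?r,?s) - \<beta> * (?\<omega> * X $$ (?r,?s))))"
      using r s by (simp add: \<Psi> commute)
    also have "\<dots> = ?\<omega> * (\<Sum>k<n. w k * (weyl_conj d (a k) (b k) X $$ (?r,?s) - \<beta> * X $$ (?r,?s)))"
      by (simp add: sum_distrib_left algebra_simps)
    also have "\<dots> = weyl_conj d a0 b0 (\<Psi> X) $$ (r,s)"
      using d r s X by (simp add: \<Psi>)
    finally show "\<Psi> (weyl_conj d a0 b0 X) $$ (r,s) = weyl_conj d a0 b0 (\<Psi> X) $$ (r,s)" .
  qed (use X in \<open>simp_all add: \<Psi>\<close>)
qed

lemma weyl_conj_mat_unit: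
  assumes d: "0 < d" and p: "p < d" and q: "q < d"
  shows "weyl_conj d a b (mat_unit d p q)
       = unity_root d (b * (int p - int q)) \<cdot>\<^sub>m mat_unit d (residue d (int p + a)) (residue d (int q + a))"
proof (rule eq_matI)
  fix r s assume "r < dim_row (unity_root d (b * (int p - int q)) \<cdot>\<^sub>m mat_unit d (residue d (int p + a)) (residue d (int q + a)))"
    "s < dim_col (unity_root d (b * (int p - int q)) \<cdot>\<^sub>m mat_unit d (residue d (int p + a)) (residue d (int q + a)))"
  then have r: "r < d" and s: "s < d" by auto
  have "(int (residue d (int r - a)) - int (residue d (int s - a))) mod int d = (int r - int s) mod int d"
    using d by (simp add: of_nat_residue mod_diff_eq)
  then have "unity_root d (b * (int r - int s)) = unity_root d (b * (int (residue d (int r - a)) - int (residue d (int s - a))))"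
    by (rule unity_root_mult_cong[OF d, symmetric])
  then show "weyl_conj d a b (mat_unit d p q) $$ (r,s)
    = (unity_root d (b * (int p - int q)) \<cdot>\<^sub>m mat_unit d (residue d (int p + a)) (residue d (int q + a))) $$ (r,s)"
    using d p q r s by (auto simp: residue_add_eq_iff)
qed auto

text \<open>\<open>weyl_coeff d \<Psi> c e\<close> is the Choi form of \<open>\<Psi>\<close> evaluated at \<open>\<Sum>\<^sub>p \<xi>\<^bsup>ep\<^esup> e\<^sub>p \<otimes> e\<^bsub>p+c\<^esub>\<close>
  (see \<open>weyl_coeff_nonneg\<close>); for a covariant \<open>\<Psi>\<close> these are the weights of the Weyl conjugations in \<open>d\<^sup>2 \<Psi>\<close>.\<close>

definition weyl_coeff :: "nat \<Rightarrow> (complex mat \<Rightarrow> complex mat) \<Rightarrow> nat \<Rightarrow> nat \<Rightarrow> complex" where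
  "weyl_coeff d \<Psi> c e = (\<Sum>p<d. \<Sum>q<d. unity_root d (int e * (int q - int p)) *
      \<Psi> (mat_unit d p q) $$ (residue d (int p + int c), residue d (int q + int c)))"

lemma weyl_coeff_fourier_sum:
  assumes d: "0 < d"
  shows "(\<Sum>e<d. weyl_coeff d \<Psi> c e * unity_root d (int e * (int r - int s)))
       = of_nat d * (\<Sum>p<d. \<Psi> (mat_unit d p (residue d (int p - int r + int s)))
                              $$ (residue d (int p + int c), residue d (int p - int r + int s + int c)))"
proof -
  let ?F = "\<lambda>p q. \<Psi> (mat_unit d p q) $$ (residue d (int p + int c), residue d (int q + int c))"
  let ?q = "\<lambda>p. residue d (int p - int r + int s)"
  have pick: "(\<Sum>q<d. (if int d dvd (int q - int p + int r - int s) then of_nat d else 0) * ?F p q)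
      = of_nat d * ?F p (?q p)" for p
  proof -
    have "int d dvd (int q - int p + int r - int s) \<longleftrightarrow> ?q p = q" if "q < d" for q
    proof -
      have "int d dvd (int q - int p + int r - int s) \<longleftrightarrow> (int p - int r + int s) mod int d = int q mod int d"
        by (simp add: mod_eq_dvd_iff dvd_diff_commute algebra_simps)
      also have "\<dots> \<longleftrightarrow> ?q p = q"
        using that by (simp add: residue_eq_nat_iff)
      finally show ?thesis .
    qed
    then have "(\<Sum>q<d. (if int d dvd (int q - int p + int r - int s) then of_nat d else 0) * ?F p q)
             = (\<Sum>q<d. if ?q p = q then of_nat d * ?F p q else 0)"
      by (intro sum.cong) auto
    then show ?thesis
      using d by simp
  qed
  have omega: "unity_root d (int e * (int q - int p)) * unity_root d (int e * (int r - int s))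
             = unity_root d (int e * (int q - int p + int r - int s))" for e p q
    by (simp add: algebra_simps flip: unity_root_add)
  have "(\<Sum>e<d. weyl_coeff d \<Psi> c e * unity_root d (int e * (int r - int s)))
      = (\<Sum>e<d. \<Sum>p<d. \<Sum>q<d. unity_root d (int e * (int q - int p + int r - int s)) * ?F p q)"
    unfolding weyl_coeff_def sum_distrib_right by (intro sum.cong refl) (simp only: omega[symmetric] mult_ac)
  also have "\<dots> = (\<Sum>p<d. \<Sum>q<d. (\<Sum>e<d. unity_root d (int e * (int q - int p + int r - int s))) * ?F p q)"
    unfolding sum_distrib_right by (subst sum.swap) (rule sum.cong[OF refl], rule sum.swap)
  also have "\<dots> = of_nat d * (\<Sum>p<d. ?F p (?q p))"
    using d by (simp add: unity_root_sum pick sum_distrib_left)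
  moreover have "residue d (int (?q p) + int c) = residue d (int p - int r + int s + int c)" for p
    using d by (simp add: residue_eq_iff of_nat_residue mod_add_left_eq)
  ultimately show ?thesis
    by simp
qed

context
  fixes d :: nat and \<Psi> :: "complex mat \<Rightarrow> complex mat"
  assumes d: "0 < d" and linear: "linear_on_Md d \<Psi>" and covariant: "weyl_conj_covariant d \<Psi>"
begin

lemma covariant_commutes: "X \<in> carrier_mat d d \<Longrightarrow> \<Psi> (weyl_conj d a b X) = weyl_conj d a b (\<Psi> X)"
  using covariant by (simp add: weyl_conj_covariant_def commutes_on_def)

lemma covariant_mat_unit_entry_eq_0:
  assumes pq: "p < d" "q < d" and rs: "r < d" "s < d"
    and ne: "(int p - int q) mod int d \<noteq> (int r - int s) mod int d"
  shows "\<Psi> (mat_unit d p q) $$ (r,s) = 0"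
proof -
  have "unity_root d (int p - int q) \<cdot>\<^sub>m \<Psi> (mat_unit d p q) = weyl_conj d 0 1 (\<Psi> (mat_unit d p q))"
    using covariant_commutes[of "mat_unit d p q" 0 1] weyl_conj_mat_unit[OF d pq, of 0 1] pq linear
    by (simp add: linear_on_Md_smult)
  then have "(unity_root d (int p - int q) \<cdot>\<^sub>m \<Psi> (mat_unit d p q)) $$ (r,s)
      = weyl_conj d 0 1 (\<Psi> (mat_unit d p q)) $$ (r,s)"
    by simp
  then have "unity_root d (int p - int q) * \<Psi> (mat_unit d p q) $$ (r,s)
      = unity_root d (int r - int s) * \<Psi> (mat_unit d p q) $$ (r,s)"
    using linear_on_Md_carrier[OF linear mat_unit_carrier, of p q] rs by simp
  moreover have "unity_root d (int p - int q) \<noteq> unity_root d (int r - int s)"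
    using d ne by (simp add: unity_root_eq_iff)
  ultimately show ?thesis
    by simp
qed

lemma covariant_mat_unit_shift:
  assumes pq: "p < d" "q < d" and rs: "r < d" "s < d"
  shows "\<Psi> (mat_unit d (residue d (int p + a)) (residue d (int q + a))) $$ (r,s)
       = \<Psi> (mat_unit d p q) $$ (residue d (int r - a), residue d (int s - a))"
  using covariant_commutes[of "mat_unit d p q" a 0] weyl_conj_mat_unit[OF d pq, of a 0] rs by simp

lemma covariant_expand_diagonals:
  assumes X: "X \<in> carrier_mat d d" and r: "r < d" and s: "s < d"
  shows "\<Psi> X $$ (r,s) = (\<Sum>c<d. X $$ (residue d (int r - int c), residue d (int s - int c))
                         * \<Psi> (mat_unit d (residue d (int r - int c)) (residue d (int s - int c))) $$ (r,s))"
proof -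
  let ?F = "\<lambda>k l. X $$ (k,l) * \<Psi> (mat_unit d k l) $$ (r,s)"
  let ?k = "\<lambda>c. residue d (int r - int c)" and ?l = "\<lambda>c. residue d (int s - int c)"
  have off_diagonal: "?F (?k c) (?l c') = (if c' = c then ?F (?k c) (?l c) else 0)" if "c < d" "c' < d" for c c'
  proof (cases "c' = c")
    case False
    have "(int (?k c) - int (?l c')) mod int d = (int r - int c - (int s - int c')) mod int d"
      using d by (simp add: of_nat_residue mod_diff_eq)
    then have "(int (?k c) - int (?l c')) mod int d = (int r - int s + (int c' - int c)) mod int d"
      by (simp add: algebra_simps)
    moreover have "\<not> int d dvd (int c' - int c)"
      using that False by (simp add: nat_less_dvd_diff_iff)
    moreover have "(int r - int s + (int c' - int c)) mod int d = (int r - int s) mod int d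
        \<longleftrightarrow> int d dvd (int c' - int c)"
      by (simp add: mod_eq_dvd_iff)
    ultimately have "(int (?k c) - int (?l c')) mod int d \<noteq> (int r - int s) mod int d"
      by simp
    then show ?thesis
      using d r s False by (simp add: covariant_mat_unit_entry_eq_0)
  qed simp
  have "\<Psi> X $$ (r,s) = (\<Sum>k<d. \<Sum>l<d. ?F k l)"
    by (rule linear_on_Md_expand[OF linear X r s])
  also have "\<dots> = (\<Sum>c<d. \<Sum>l<d. ?F (?k c) l)"
    by (rule sum_residue_diff_reindex[OF d, symmetric])
  also have "\<dots> = (\<Sum>c<d. \<Sum>c'<d. ?F (?k c) (?l c'))"
    by (rule sum.cong[OF refl]) (rule sum_residue_diff_reindex[OF d, symmetric])
  also have "\<dots> = (\<Sum>c<d. \<Sum>c'<d. if c' = c then ?F (?k c) (?l c) else 0)"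
    by (intro sum.cong refl) (simp add: off_diagonal)
  also have "\<dots> = (\<Sum>c<d. ?F (?k c) (?l c))"
    by simp
  finally show ?thesis .
qed

lemma weyl_coeff_fourier:
  assumes r: "r < d" and s: "s < d" and c: "c < d"
  shows "(\<Sum>e<d. weyl_coeff d \<Psi> c e * unity_root d (int e * (int r - int s)))
       = of_nat d * of_nat d * \<Psi> (mat_unit d (residue d (int r - int c)) (residue d (int s - int c))) $$ (r,s)"
proof -
  have "\<Psi> (mat_unit d p (residue d (int p - int r + int s))) $$ (residue d (int p + int c), residue d (int p - int r + int s + int c))
      = \<Psi> (mat_unit d (residue d (int r - int c)) (residue d (int s - int c))) $$ (r,s)" if p: "p < d" for p
  proof -
    define a where "a = int r - int c - int p"
    have "residue d (int (residue d (int p - int r + int s)) + a) = residue d (int s - int c)"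
      using d by (simp add: a_def residue_eq_iff of_nat_residue mod_add_left_eq)
    moreover have "residue d (int s - a) = residue d (int p - int r + int s + int c)"
      using d by (simp add: a_def algebra_simps)
    moreover have "residue d (int p + a) = residue d (int r - int c)" "residue d (int r - a) = residue d (int p + int c)"
      by (simp_all add: a_def add.commute)
    ultimately show ?thesis
      using covariant_mat_unit_shift[OF p residue_less[OF d, of "int p - int r + int s"] r s, of a] by simp
  qed
  then show ?thesis
    using weyl_coeff_fourier_sum[OF d, of \<Psi> c r s] by simp
qed

lemma covariant_decomposition:
  assumes X: "X \<in> carrier_mat d d" and r: "r < d" and s: "s < d"
  shows "of_nat d * of_nat d * \<Psi> X $$ (r,s)
       = (\<Sum>c<d. \<Sum>e<d. weyl_coeff d \<Psi> c e * weyl_conj d (int c) (int e) X $$ (r,s))"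
proof -
  have "(\<Sum>c<d. \<Sum>e<d. weyl_coeff d \<Psi> c e * weyl_conj d (int c) (int e) X $$ (r,s))
      = (\<Sum>c<d. (\<Sum>e<d. weyl_coeff d \<Psi> c e * unity_root d (int e * (int r - int s)))
                 * X $$ (residue d (int r - int c), residue d (int s - int c)))"
    using r s by (simp add: sum_distrib_right mult.assoc)
  also have "\<dots> = of_nat d * of_nat d * (\<Sum>c<d. X $$ (residue d (int r - int c), residue d (int s - int c))
        * \<Psi> (mat_unit d (residue d (int r - int c)) (residue d (int s - int c))) $$ (r,s))"
    using r s by (simp add: weyl_coeff_fourier sum_distrib_left mult_ac)
  also have "\<dots> = of_nat d * of_nat d * \<Psi> X $$ (r,s)"
    using covariant_expand_diagonals[OF X r s] by simp
  finally show ?thesis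
    by simp
qed

lemma weyl_coeff_sum:
  "(\<Sum>c<d. \<Sum>e<d. weyl_coeff d \<Psi> c e) = of_nat d * of_nat d * \<Psi> (1\<^sub>m d) $$ (0,0)"
  using covariant_decomposition[OF one_carrier_mat d d] d by simp

lemma covariant_expansion:
  assumes X: "X \<in> carrier_mat d d"
  shows "\<Psi> X = mat d d (\<lambda>(i,j). \<Sum>c<d. \<Sum>e<d.
           weyl_coeff d \<Psi> c e / (of_nat d * of_nat d) * weyl_conj d (int c) (int e) X $$ (i,j))"
proof (rule eq_matI)
  fix i j assume "i < dim_row (mat d d (\<lambda>(i,j). \<Sum>c<d. \<Sum>e<d.
           weyl_coeff d \<Psi> c e / (of_nat d * of_nat d) * weyl_conj d (int c) (int e) X $$ (i,j)))"
    "j < dim_col (mat d d (\<lambda>(i,j). \<Sum>c<d. \<Sum>e<d.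
           weyl_coeff d \<Psi> c e / (of_nat d * of_nat d) * weyl_conj d (int c) (int e) X $$ (i,j)))"
  then have i: "i < d" and j: "j < d" by auto
  show "\<Psi> X $$ (i,j) = mat d d (\<lambda>(i,j). \<Sum>c<d. \<Sum>e<d.
           weyl_coeff d \<Psi> c e / (of_nat d * of_nat d) * weyl_conj d (int c) (int e) X $$ (i,j)) $$ (i,j)"
    using covariant_decomposition[OF X i j] d i j
    by (simp add: sum_divide_distrib[symmetric] field_simps)
qed (use linear_on_Md_carrier[OF linear X] in auto)

lemma covariant_expansion_weyl:
  assumes X: "X \<in> carrier_mat d d"
  shows "\<Psi> X = mat d d (\<lambda>(i,j). \<Sum>k<d * d. weyl_coeff d \<Psi> (k div d) (k mod d) / (of_nat d * of_nat d)
           * (weyl d (k div d) (k mod d) * X * mat_adjoint (weyl d (k div d) (k mod d))) $$ (i,j))"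
proof -
  have "(\<Sum>k<d * d. weyl_coeff d \<Psi> (k div d) (k mod d) / (of_nat d * of_nat d)
          * (weyl d (k div d) (k mod d) * X * mat_adjoint (weyl d (k div d) (k mod d))) $$ (i,j))
      = (\<Sum>c<d. \<Sum>e<d. weyl_coeff d \<Psi> c e / (of_nat d * of_nat d) * weyl_conj d (int c) (int e) X $$ (i,j))"
    for i j
  proof -
    have "(\<Sum>k<d * d. weyl_coeff d \<Psi> (k div d) (k mod d) / (of_nat d * of_nat d)
            * (weyl d (k div d) (k mod d) * X * mat_adjoint (weyl d (k div d) (k mod d))) $$ (i,j))
        = (\<Sum>k<d * d. weyl_coeff d \<Psi> (k div d) (k mod d) / (of_nat d * of_nat d)
            * weyl_conj d (int (k div d)) (int (k mod d)) X $$ (i,j))"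
      using d X by (simp add: weyl_mult_adjoint)
    also have "\<dots> = (\<Sum>c<d. \<Sum>e<d. weyl_coeff d \<Psi> c e / (of_nat d * of_nat d) * weyl_conj d (int c) (int e) X $$ (i,j))"
      by (rule sum_lessThan_square_div_mod)
    finally show ?thesis .
  qed
  then show ?thesis
    by (simp add: covariant_expansion[OF X])
qed

end

section \<open>Choi positivity and mixed Weyl-unitary channels\<close>

text \<open>The unnormalised projection onto \<open>\<Sum>\<^sub>p e\<^sub>p \<otimes> e\<^sub>p\<close>, with \<open>e\<^sub>p \<otimes> e\<^sub>k\<close> indexed by \<open>p * d + k\<close>;
  amplifying a map to it yields the Choi matrix of the map.\<close>

definition max_entangled :: "nat \<Rightarrow> complex mat" where
  "max_entangled d = mat (d * d) (d * d) (\<lambda>(i,j). if i mod d = i div d \<and> j mod d = j div d then 1 else 0)"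

lemma psd_max_entangled: "psd (d * d) (max_entangled d)"
  unfolding psd_def
proof (intro conjI allI)
  show "max_entangled d \<in> carrier_mat (d * d) (d * d)"
    by (simp add: max_entangled_def)
  fix v :: "nat \<Rightarrow> complex"
  let ?P = "\<lambda>i. i mod d = i div d"
  let ?S = "\<Sum>j<d * d. if ?P j then v j else 0"
  have "(\<Sum>i<d * d. \<Sum>j<d * d. cnj (v i) * max_entangled d $$ (i,j) * v j)
      = (\<Sum>i<d * d. \<Sum>j<d * d. (if ?P i then cnj (v i) else 0) * (if ?P j then v j else 0))"
    by (intro sum.cong refl) (auto simp: max_entangled_def)
  also have "\<dots> = (\<Sum>i<d * d. if ?P i then cnj (v i) else 0) * ?S"
    by (simp add: sum_product)
  also have "\<dots> = cnj ?S * ?S"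
    by (subst cnj_sum) (auto intro!: sum.cong arg_cong2[where f = times])
  also have "\<dots> = of_real ((norm ?S)\<^sup>2)"
    using complex_norm_square[of ?S] by (simp only: mult.commute)
  finally have form: "(\<Sum>i<d * d. \<Sum>j<d * d. cnj (v i) * max_entangled d $$ (i,j) * v j) = of_real ((norm ?S)\<^sup>2)" .
  show "Im (\<Sum>i<d * d. \<Sum>j<d * d. cnj (v i) * max_entangled d $$ (i,j) * v j) = 0"
    "0 \<le> Re (\<Sum>i<d * d. \<Sum>j<d * d. cnj (v i) * max_entangled d $$ (i,j) * v j)"
    unfolding form by simp_all
qed

lemma index_choi_mat:
  assumes "p < d" "k < d" "q < d" "l < d"
  shows "ampliate d d \<Psi> (max_entangled d) $$ (p * d + k, q * d + l) = \<Psi> (mat_unit d p q) $$ (k,l)"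
proof -
  have less: "x * d + y < d * d" if "x < d" "y < d" for x y
  proof -
    have "x * d + y < (x + 1) * d"
      using that by simp
    also have "\<dots> \<le> d * d"
      using that by (intro mult_le_mono1) simp
    finally show ?thesis .
  qed
  have "mat d d (\<lambda>(k',l'). max_entangled d $$ (((p * d + k) div d) * d + k', ((q * d + l) div d) * d + l'))
      = mat_unit d p q"
    using assms by (intro eq_matI) (auto simp: max_entangled_def less)
  then show ?thesis
    using assms less[of p k] less[of q l] by (simp add: ampliate_def)
qed

lemma weyl_coeff_nonneg:
  assumes d: "0 < d" and cp: "completely_positive d \<Psi>"
  shows "weyl_coeff d \<Psi> c e \<in> \<real>\<^sub>\<ge>\<^sub>0"
proof -
  let ?A = "ampliate d d \<Psi> (max_entangled d)"
  let ?K = "\<lambda>p. residue d (int p + int c)" and ?\<omega> = "\<lambda>p. unity_root d (int e * int p)"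
  define v where "v i = (if i mod d = ?K (i div d) then ?\<omega> (i div d) else 0)" for i
  have pick: "(\<Sum>i<d * d. w (v i) * g i) = (\<Sum>p<d. w (?\<omega> p) * g (p * d + ?K p))"
    if "w 0 = 0" for w :: "complex \<Rightarrow> complex" and g
  proof -
    have "w (v (p * d + k)) * g (p * d + k) = (if k = ?K p then w (?\<omega> p) * g (p * d + k) else 0)"
      if "k < d" for p k
      using that \<open>w 0 = 0\<close> by (simp add: v_def)
    then have "(\<Sum>i<d * d. w (v i) * g i) = (\<Sum>p<d. \<Sum>k<d. if k = ?K p then w (?\<omega> p) * g (p * d + k) else 0)"
      by (simp add: sum_lessThan_mult_split)
    then show ?thesis
      using d by simp
  qed
  have "(\<Sum>i<d * d. \<Sum>j<d * d. cnj (v i) * ?A $$ (i,j) * v j)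
      = (\<Sum>i<d * d. cnj (v i) * (\<Sum>j<d * d. v j * ?A $$ (i,j)))"
    by (simp add: sum_distrib_left mult_ac)
  also have "\<dots> = (\<Sum>i<d * d. cnj (v i) * (\<Sum>q<d. ?\<omega> q * ?A $$ (i, q * d + ?K q)))"
    using pick[of "\<lambda>z. z"] by simp
  also have "\<dots> = (\<Sum>p<d. cnj (?\<omega> p) * (\<Sum>q<d. ?\<omega> q * ?A $$ (p * d + ?K p, q * d + ?K q)))"
    using pick[of cnj] by simp
  also have "\<dots> = weyl_coeff d \<Psi> c e"
    unfolding weyl_coeff_def sum_distrib_left
    using d by (intro sum.cong refl) (simp add: index_choi_mat unity_root_diff algebra_simps)
  finally have form: "(\<Sum>i<d * d. \<Sum>j<d * d. cnj (v i) * ?A $$ (i,j) * v j) = weyl_coeff d \<Psi> c e" .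
  have "psd (d * d) ?A"
    using cp psd_max_entangled unfolding completely_positive_def by blast
  then show ?thesis
    unfolding psd_def complex_nonneg_Reals_iff form[symmetric] by blast
qed

lemma mixed_weyl_unitary_imp_covariant:
  assumes d: "0 < d" and "mixed_weyl_unitary d \<Psi>"
  shows "weyl_conj_covariant d \<Psi>"
proof -
  obtain n :: nat and lam ab where \<Psi>: "\<forall>X\<in>carrier_mat d d. \<Psi> X = mat d d (\<lambda>(i,j). \<Sum>k<n. complex_of_real (lam k) *
      ((weyl d (fst (ab k)) (snd (ab k)) * X * mat_adjoint (weyl d (fst (ab k)) (snd (ab k)))) $$ (i,j)))"
    using assms(2) unfolding mixed_weyl_unitary_def by fast
  show ?thesis
    by (rule weyl_conj_covariant_sum[OF d, where w = "\<lambda>k. of_real (lam k)" and \<beta> = 0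
          and a = "\<lambda>k. int (fst (ab k))" and b = "\<lambda>k. int (snd (ab k))"])
       (simp add: \<Psi> weyl_mult_adjoint d)
qed

lemma covariant_imp_mixed_weyl_unitary:
  assumes d: "0 < d" and linear: "linear_on_Md d \<Psi>" and covariant: "weyl_conj_covariant d \<Psi>"
    and cp: "completely_positive d \<Psi>" and unital: "\<Psi> (1\<^sub>m d) = 1\<^sub>m d"
  shows "mixed_weyl_unitary d \<Psi>"
proof -
  let ?\<chi> = "weyl_coeff d \<Psi>"
  define lam where "lam k = Re (?\<chi> (k div d) (k mod d)) / (real d * real d)" for k
  define ab where "ab k = (k div d, k mod d)" for k
  have real: "of_real (Re (?\<chi> c e)) = ?\<chi> c e" and nonneg: "0 \<le> Re (?\<chi> c e)" for c e
    using weyl_coeff_nonneg[OF d cp, of c e] by (auto simp: complex_nonneg_Reals_iff complex_eq_iff)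
  have total: "(\<Sum>c<d. \<Sum>e<d. ?\<chi> c e) = of_nat d * of_nat d"
    using weyl_coeff_sum[OF d linear covariant] d by (simp add: unital)
  show ?thesis
    unfolding mixed_weyl_unitary_def
  proof (intro exI[of _ "d * d"] exI[of _ lam] exI[of _ ab] conjI allI impI ballI)
    fix k assume k: "k < d * d"
    show "0 \<le> lam k"
      by (simp add: lam_def nonneg)
    show "fst (ab k) < d" "snd (ab k) < d"
      using k d by (simp_all add: ab_def less_mult_imp_div_less)
  next
    have "(\<Sum>k<d * d. lam k) = (\<Sum>c<d. \<Sum>e<d. Re (?\<chi> c e) / (real d * real d))"
      unfolding lam_def by (rule sum_lessThan_square_div_mod)
    also have "\<dots> = Re (\<Sum>c<d. \<Sum>e<d. ?\<chi> c e) / (real d * real d)"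
      by (simp add: sum_divide_distrib)
    finally have "(\<Sum>k<d * d. lam k) = Re (\<Sum>c<d. \<Sum>e<d. ?\<chi> c e) / (real d * real d)" .
    then show "(\<Sum>k<d * d. lam k) = 1"
      using d by (simp add: total)
  next
    fix X :: "complex mat" assume X: "X \<in> carrier_mat d d"
    have "of_real (lam k) = ?\<chi> (k div d) (k mod d) / (of_nat d * of_nat d)" for k
      by (simp add: lam_def real)
    then show "\<Psi> X = mat d d (\<lambda>(i,j). \<Sum>k<d * d. complex_of_real (lam k) *
        ((weyl d (fst (ab k)) (snd (ab k)) * X * mat_adjoint (weyl d (fst (ab k)) (snd (ab k)))) $$ (i,j)))"
      by (simp add: ab_def covariant_expansion_weyl[OF d linear covariant X])
  qed
qed

lemma mixed_weyl_unitary_iff_covariant: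
  assumes "0 < d" and "linear_on_Md d \<Psi>" and "completely_positive d \<Psi>" and "\<Psi> (1\<^sub>m d) = 1\<^sub>m d"
  shows "mixed_weyl_unitary d \<Psi> \<longleftrightarrow> weyl_conj_covariant d \<Psi>"
  using assms mixed_weyl_unitary_imp_covariant covariant_imp_mixed_weyl_unitary by blast

section \<open>Semigroups of linear maps and their generators\<close>

lemma has_vector_derivative_iff_tendsto_quotient:
  "((f :: real \<Rightarrow> complex) has_vector_derivative D) (at x within S) \<longleftrightarrow>
   ((\<lambda>y. (f y - f x) / of_real (y - x)) \<longlongrightarrow> D) (at x within S)"
  unfolding has_vector_derivative_complex_iff has_field_derivative_iff tendsto_complex_iff
  by (simp add: Re_divide_of_real Im_divide_of_real)

locale linear_semigroup =
  fixes d :: nat and \<Phi> :: "real \<Rightarrow> complex mat \<Rightarrow> complex mat" and L :: "complex mat \<Rightarrow> complex mat"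
  assumes linear: "0 \<le> t \<Longrightarrow> linear_on_Md d (\<Phi> t)"
    and initial: "X \<in> carrier_mat d d \<Longrightarrow> \<Phi> 0 X = X"
    and semigroup: "0 \<le> s \<Longrightarrow> 0 \<le> t \<Longrightarrow> X \<in> carrier_mat d d \<Longrightarrow> \<Phi> s (\<Phi> t X) = \<Phi> (s + t) X"
    and continuous: "X \<in> carrier_mat d d \<Longrightarrow> i < d \<Longrightarrow> j < d \<Longrightarrow> continuous_on {0..} (\<lambda>t. \<Phi> t X $$ (i,j))"
    and generator: "generator d \<Phi> L"
begin

lemma semigroup_carrier: "0 \<le> t \<Longrightarrow> X \<in> carrier_mat d d \<Longrightarrow> \<Phi> t X \<in> carrier_mat d d"
  using linear linear_on_Md_carrier by blast

lemma generator_carrier: "X \<in> carrier_mat d d \<Longrightarrow> L X \<in> carrier_mat d d"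
  using generator by (simp add: generator_def)

lemma tendsto_generator:
  assumes X: "X \<in> carrier_mat d d" and "i < d" "j < d"
  shows "((\<lambda>h. (\<Phi> h X $$ (i,j) - X $$ (i,j)) / of_real h) \<longlongrightarrow> L X $$ (i,j)) (at_right 0)"
proof -
  have "((\<lambda>t. \<Phi> t X $$ (i,j)) has_vector_derivative L X $$ (i,j)) (at_right 0)"
    using generator assms by (simp add: generator_def)
  then show ?thesis
    using initial[OF X] by (simp add: has_vector_derivative_iff_tendsto_quotient)
qed

lemma generator_entry_eqI:
  assumes X: "X \<in> carrier_mat d d" and ij: "i < d" "j < d" and lim: "(f \<longlongrightarrow> c) (at_right 0)"
    and quotient: "\<And>h. 0 < h \<Longrightarrow> (\<Phi> h X $$ (i,j) - X $$ (i,j)) / of_real h = f h"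
  shows "L X $$ (i,j) = c"
proof -
  have "\<forall>\<^sub>F h in at_right 0. (\<Phi> h X $$ (i,j) - X $$ (i,j)) / of_real h = f h"
    using eventually_at_right_less by (rule eventually_mono) (rule quotient)
  then have "(f \<longlongrightarrow> L X $$ (i,j)) (at_right 0)"
    by (rule Lim_transform_eventually[OF tendsto_generator[OF X ij]])
  then show ?thesis
    using lim by (rule tendsto_unique[OF trivial_limit_at_right_real])
qed

lemma generator_add:
  assumes X: "X \<in> carrier_mat d d" and Y: "Y \<in> carrier_mat d d"
  shows "L (X + Y) = L X + L Y"
proof (rule eq_matI)
  fix i j assume "i < dim_row (L X + L Y)" "j < dim_col (L X + L Y)"
  then have ij: "i < d" "j < d"
    using generator_carrier[OF X] generator_carrier[OF Y] by auto
  have "L (X + Y) $$ (i,j) = L X $$ (i,j) + L Y $$ (i,j)"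
  proof (rule generator_entry_eqI[OF _ ij tendsto_add[OF tendsto_generator[OF X ij] tendsto_generator[OF Y ij]]])
    fix h :: real assume "0 < h"
    then show "(\<Phi> h (X + Y) $$ (i,j) - (X + Y) $$ (i,j)) / of_real h
        = (\<Phi> h X $$ (i,j) - X $$ (i,j)) / of_real h + (\<Phi> h Y $$ (i,j) - Y $$ (i,j)) / of_real h"
      using X Y ij semigroup_carrier[of h X] semigroup_carrier[of h Y] linear[of h]
      by (simp add: linear_on_Md_add add_divide_distrib[symmetric])
  qed (use X Y in simp)
  then show "L (X + Y) $$ (i,j) = (L X + L Y) $$ (i,j)"
    using generator_carrier[OF X] generator_carrier[OF Y] ij by simp
qed (use generator_carrier[OF X] generator_carrier[OF Y] generator_carrier[of "X + Y"] X Y in auto)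

lemma generator_smult:
  assumes X: "X \<in> carrier_mat d d"
  shows "L (c \<cdot>\<^sub>m X) = c \<cdot>\<^sub>m L X"
proof (rule eq_matI)
  fix i j assume "i < dim_row (c \<cdot>\<^sub>m L X)" "j < dim_col (c \<cdot>\<^sub>m L X)"
  then have ij: "i < d" "j < d"
    using generator_carrier[OF X] by auto
  have "L (c \<cdot>\<^sub>m X) $$ (i,j) = c * L X $$ (i,j)"
  proof (rule generator_entry_eqI[OF _ ij tendsto_mult_left[OF tendsto_generator[OF X ij]]])
    fix h :: real assume "0 < h"
    then show "(\<Phi> h (c \<cdot>\<^sub>m X) $$ (i,j) - (c \<cdot>\<^sub>m X) $$ (i,j)) / of_real h
        = c * ((\<Phi> h X $$ (i,j) - X $$ (i,j)) / of_real h)"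
      using X ij semigroup_carrier[of h X] linear[of h] by (simp add: linear_on_Md_smult algebra_simps diff_divide_distrib)
  qed (use X in simp)
  then show "L (c \<cdot>\<^sub>m X) $$ (i,j) = (c \<cdot>\<^sub>m L X) $$ (i,j)"
    using generator_carrier[OF X] ij by simp
qed (use generator_carrier[OF X] generator_carrier[of "c \<cdot>\<^sub>m X"] X in auto)

lemma linear_generator: "linear_on_Md d L"
  unfolding linear_on_Md_def by (simp add: generator_carrier generator_add generator_smult)

(* T h = \<Phi> u gives the right derivative of the semigroup at u, T h = \<Phi> (u - h) the left one. *)
lemma tendsto_linear_quotient:
  assumes T: "\<forall>\<^sub>F h in at_right 0. linear_on_Md d (T h)" and S: "linear_on_Md d S"
    and T_S: "\<And>k l. k < d \<Longrightarrow> l < d \<Longrightarrow> ((\<lambda>h. T h (mat_unit d k l) $$ (i,j)) \<longlongrightarrow> S (mat_unit d k l) $$ (i,j)) (at_right 0)"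
    and Y: "Y \<in> carrier_mat d d" and ij: "i < d" "j < d"
  shows "((\<lambda>h. (T h (\<Phi> h Y) $$ (i,j) - T h Y $$ (i,j)) / of_real h) \<longlongrightarrow> S (L Y) $$ (i,j)) (at_right 0)"
proof -
  let ?Q = "\<lambda>h k l. (\<Phi> h Y $$ (k,l) - Y $$ (k,l)) / of_real h"
  have lim: "((\<lambda>h. \<Sum>k<d. \<Sum>l<d. ?Q h k l * T h (mat_unit d k l) $$ (i,j))
         \<longlongrightarrow> (\<Sum>k<d. \<Sum>l<d. L Y $$ (k,l) * S (mat_unit d k l) $$ (i,j))) (at_right 0)"
    using Y by (intro tendsto_sum tendsto_mult tendsto_generator T_S) auto
  have limit_value: "(\<Sum>k<d. \<Sum>l<d. L Y $$ (k,l) * S (mat_unit d k l) $$ (i,j)) = S (L Y) $$ (i,j)"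
    using linear_on_Md_expand[OF S generator_carrier[OF Y] ij] by simp
  have "\<forall>\<^sub>F h in at_right 0. (\<Sum>k<d. \<Sum>l<d. ?Q h k l * T h (mat_unit d k l) $$ (i,j))
      = (T h (\<Phi> h Y) $$ (i,j) - T h Y $$ (i,j)) / of_real h"
    using eventually_conj[OF T eventually_at_right_less]
  proof (rule eventually_mono)
    fix h :: real assume h: "linear_on_Md d (T h) \<and> 0 < h"
    then have "T h (\<Phi> h Y) $$ (i,j) = (\<Sum>k<d. \<Sum>l<d. \<Phi> h Y $$ (k,l) * T h (mat_unit d k l) $$ (i,j))"
      "T h Y $$ (i,j) = (\<Sum>k<d. \<Sum>l<d. Y $$ (k,l) * T h (mat_unit d k l) $$ (i,j))"
      using Y ij semigroup_carrier[of h Y] by (simp_all add: linear_on_Md_expand)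
    then show "(\<Sum>k<d. \<Sum>l<d. ?Q h k l * T h (mat_unit d k l) $$ (i,j))
      = (T h (\<Phi> h Y) $$ (i,j) - T h Y $$ (i,j)) / of_real h"
      by (simp add: sum_divide_distrib diff_divide_distrib sum_subtractf left_diff_distrib)
  qed
  from Lim_transform_eventually[OF lim this] show ?thesis
    by (simp only: limit_value)
qed

lemma generator_commutes:
  assumes T: "linear_on_Md d T" and commute: "\<And>h. 0 < h \<Longrightarrow> commutes_on d (\<Phi> h) T"
  shows "commutes_on d L T"
  unfolding commutes_on_def
proof
  fix X :: "complex mat" assume X: "X \<in> carrier_mat d d"
  have TX: "T X \<in> carrier_mat d d"
    using T X by (rule linear_on_Md_carrier)
  show "L (T X) = T (L X)"
  proof (rule eq_matI)
    fix i j assume "i < dim_row (T (L X))" "j < dim_col (T (L X))"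
    then have ij: "i < d" "j < d"
      using linear_on_Md_carrier[OF T generator_carrier[OF X]] by auto
    show "L (T X) $$ (i,j) = T (L X) $$ (i,j)"
    proof (rule generator_entry_eqI[OF TX ij tendsto_linear_quotient[OF _ T _ X ij]])
      fix h :: real assume "0 < h"
      then show "(\<Phi> h (T X) $$ (i,j) - T X $$ (i,j)) / of_real h = (T (\<Phi> h X) $$ (i,j) - T X $$ (i,j)) / of_real h"
        using commute X by (simp add: commutes_on_def)
    qed (simp_all add: T)
  qed (use linear_on_Md_carrier[OF T generator_carrier[OF X]] generator_carrier[OF TX] in auto)
qed

lemma generator_commutes_semigroup:
  assumes "0 \<le> u"
  shows "commutes_on d L (\<Phi> u)"
proof (rule generator_commutes[OF linear[OF assms]])
  fix h :: real assume "0 < h"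
  then show "commutes_on d (\<Phi> h) (\<Phi> u)"
    using assms by (simp add: commutes_on_def semigroup add.commute)
qed

lemma has_vector_derivative_semigroup:
  assumes u: "0 < u" and Y: "Y \<in> carrier_mat d d" and ij: "i < d" "j < d"
  shows "((\<lambda>t. \<Phi> t Y $$ (i,j)) has_vector_derivative \<Phi> u (L Y) $$ (i,j)) (at u)"
proof -
  let ?G = "\<lambda>t. (\<Phi> t Y $$ (i,j) - \<Phi> u Y $$ (i,j)) / of_real (t - u)"
  have entry_limit: "((\<lambda>h. \<Phi> (u - h) (mat_unit d k l) $$ (i,j)) \<longlongrightarrow> \<Phi> u (mat_unit d k l) $$ (i,j)) (at_right 0)"
    for k l
  proof -
    have "isCont (\<lambda>t. \<Phi> t (mat_unit d k l) $$ (i,j)) u"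
      by (rule continuous_on_interior[OF continuous[OF mat_unit_carrier ij]]) (use u in simp)
    then show ?thesis
      by (rule isCont_tendsto_compose) (auto intro!: tendsto_eq_intros)
  qed
  have "((\<lambda>h. (\<Phi> u (\<Phi> h Y) $$ (i,j) - \<Phi> u Y $$ (i,j)) / of_real h) \<longlongrightarrow> \<Phi> u (L Y) $$ (i,j)) (at_right 0)"
    using u Y ij linear[of u] by (intro tendsto_linear_quotient) auto
  moreover have "\<forall>\<^sub>F h in at_right 0. (\<Phi> u (\<Phi> h Y) $$ (i,j) - \<Phi> u Y $$ (i,j)) / of_real h = ?G (h + u)"
    using eventually_at_right_less by (rule eventually_mono) (use u Y in \<open>simp add: semigroup add.commute\<close>)
  ultimately have right: "(?G \<longlongrightarrow> \<Phi> u (L Y) $$ (i,j)) (at_right u)"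
    by (simp add: filterlim_at_right_to_0[of _ _ u] Lim_transform_eventually)
  have below_u: "\<forall>\<^sub>F h in at_right 0. h < u"
    using u by (intro order_tendstoD(2)[OF tendsto_ident_at])
  have "((\<lambda>h. (\<Phi> (u - h) (\<Phi> h Y) $$ (i,j) - \<Phi> (u - h) Y $$ (i,j)) / of_real h) \<longlongrightarrow> \<Phi> u (L Y) $$ (i,j)) (at_right 0)"
  proof (rule tendsto_linear_quotient[OF _ linear[OF less_imp_le[OF u]] entry_limit Y ij])
    show "\<forall>\<^sub>F h in at_right 0. linear_on_Md d (\<Phi> (u - h))"
      using below_u by (rule eventually_mono) (simp add: linear)
  qed
  moreover have "\<forall>\<^sub>F h in at_right 0. (\<Phi> (u - h) (\<Phi> h Y) $$ (i,j) - \<Phi> (u - h) Y $$ (i,j)) / of_real h = ?G (- (h + - u))"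
    using eventually_conj[OF eventually_at_right_less below_u]
  proof (rule eventually_mono)
    fix h :: real assume h: "0 < h \<and> h < u"
    then show "(\<Phi> (u - h) (\<Phi> h Y) $$ (i,j) - \<Phi> (u - h) Y $$ (i,j)) / of_real h = ?G (- (h + - u))"
      using Y by (simp add: semigroup field_simps)
  qed
  ultimately have left: "(?G \<longlongrightarrow> \<Phi> u (L Y) $$ (i,j)) (at_left u)"
    by (simp add: filterlim_at_left_to_right filterlim_at_right_to_0[of _ _ "- u"] Lim_transform_eventually)
  show ?thesis
    using filterlim_split_at[OF left right] by (simp add: has_vector_derivative_iff_tendsto_quotient)
qed

lemma has_vector_derivative_linear_image:
  assumes T: "linear_on_Md d T" and s: "0 < s" and X: "X \<in> carrier_mat d d" and kl: "k < d" "l < d"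
  shows "((\<lambda>s. \<Sum>m<d. \<Sum>n<d. \<Phi> s X $$ (m,n) * T (mat_unit d m n) $$ (k,l))
           has_vector_derivative T (\<Phi> s (L X)) $$ (k,l)) (at s)"
proof -
  have "((\<lambda>s. \<Sum>m<d. \<Sum>n<d. \<Phi> s X $$ (m,n) * T (mat_unit d m n) $$ (k,l)) has_vector_derivative
          (\<Sum>m<d. \<Sum>n<d. \<Phi> s (L X) $$ (m,n) * T (mat_unit d m n) $$ (k,l))) (at s)"
    using s X by (intro has_vector_derivative_sum has_vector_derivative_mult_left has_vector_derivative_semigroup) auto
  then show ?thesis
    using linear_on_Md_expand[OF T semigroup_carrier[OF _ generator_carrier[OF X]] kl] s by simp
qed

lemma has_vector_derivative_semigroup_reflected:
  assumes "s < t" and Y: "Y \<in> carrier_mat d d" and ij: "i < d" "j < d"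
  shows "((\<lambda>s. \<Phi> (t - s) Y $$ (i,j)) has_vector_derivative - \<Phi> (t - s) (L Y) $$ (i,j)) (at s)"
proof -
  have reflection: "((\<lambda>s. t - s) has_vector_derivative -1) (at s)"
    by (rule has_vector_derivative_eq_rhs[OF has_vector_derivative_diff[OF has_vector_derivative_const
          has_vector_derivative_id]]) simp
  have "((\<lambda>v. \<Phi> v Y $$ (i,j)) has_vector_derivative \<Phi> (t - s) (L Y) $$ (i,j)) (at (t - s))"
    using assms by (intro has_vector_derivative_semigroup) auto
  from vector_diff_chain_at[OF reflection this] show ?thesis
    by (simp add: o_def)
qed

(* The function is s \<mapsto> (\<Phi> (t - s) (T (\<Phi> s X))) $$ (i,j), expanded over matrix units so that
   it is defined and differentiable for every s in (0, t). *)
lemma commuting_interpolation_has_derivative_zero: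
  assumes T: "linear_on_Md d T" and commute: "commutes_on d L T"
    and s: "0 < s" "s < t" and X: "X \<in> carrier_mat d d" and ij: "i < d" "j < d"
  shows "((\<lambda>s. \<Sum>k<d. \<Sum>l<d. (\<Sum>m<d. \<Sum>n<d. \<Phi> s X $$ (m,n) * T (mat_unit d m n) $$ (k,l))
             * \<Phi> (t - s) (mat_unit d k l) $$ (i,j)) has_vector_derivative 0) (at s)"
proof -
  let ?a = "\<lambda>s k l. \<Sum>m<d. \<Sum>n<d. \<Phi> s X $$ (m,n) * T (mat_unit d m n) $$ (k,l)"
  have a: "?a s k l = T (\<Phi> s X) $$ (k,l)" if "k < d" "l < d" for k l
    using linear_on_Md_expand[OF T semigroup_carrier[OF _ X] that] s by simp
  have derivative: "((\<lambda>s. \<Sum>k<d. \<Sum>l<d. ?a s k l * \<Phi> (t - s) (mat_unit d k l) $$ (i,j)) has_vector_derivative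
      (\<Sum>k<d. \<Sum>l<d. ?a s k l * - \<Phi> (t - s) (L (mat_unit d k l)) $$ (i,j)
                     + T (\<Phi> s (L X)) $$ (k,l) * \<Phi> (t - s) (mat_unit d k l) $$ (i,j))) (at s)"
    using T s X ij
    by (intro has_vector_derivative_sum has_vector_derivative_mult has_vector_derivative_semigroup_reflected
        has_vector_derivative_linear_image) auto
  have commute_s: "T (\<Phi> s (L X)) = L (T (\<Phi> s X))"
    using generator_commutes_semigroup[of s] commute X semigroup_carrier[of s X] s by (simp add: commutes_on_def)
  have expand_L: "(\<Sum>k<d. \<Sum>l<d. T (\<Phi> s X) $$ (k,l) * \<Phi> (t - s) (L (mat_unit d k l)) $$ (i,j))
      = \<Phi> (t - s) (L (T (\<Phi> s X))) $$ (i,j)"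
    using linear_on_Md_expand[OF linear_on_Md_comp[OF linear linear_generator] linear_on_Md_carrier[OF T semigroup_carrier[OF _ X]] ij] s
    by simp
  have expand: "(\<Sum>k<d. \<Sum>l<d. L (T (\<Phi> s X)) $$ (k,l) * \<Phi> (t - s) (mat_unit d k l) $$ (i,j))
      = \<Phi> (t - s) (L (T (\<Phi> s X))) $$ (i,j)"
    using linear_on_Md_expand[OF linear generator_carrier[OF linear_on_Md_carrier[OF T semigroup_carrier[OF _ X]]] ij] s
    by simp
  have "(\<Sum>k<d. \<Sum>l<d. ?a s k l * - \<Phi> (t - s) (L (mat_unit d k l)) $$ (i,j)
                     + T (\<Phi> s (L X)) $$ (k,l) * \<Phi> (t - s) (mat_unit d k l) $$ (i,j))
      = (\<Sum>k<d. \<Sum>l<d. L (T (\<Phi> s X)) $$ (k,l) * \<Phi> (t - s) (mat_unit d k l) $$ (i,j)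
                     - T (\<Phi> s X) $$ (k,l) * \<Phi> (t - s) (L (mat_unit d k l)) $$ (i,j))"
    by (intro sum.cong refl) (simp add: a commute_s)
  also have "\<dots> = 0"
    by (simp add: sum_subtractf expand expand_L)
  finally show ?thesis
    using derivative by simp
qed

lemma semigroup_commutes_entry:
  assumes T: "linear_on_Md d T" and commute: "commutes_on d L T"
    and t: "0 < t" and X: "X \<in> carrier_mat d d" and ij: "i < d" "j < d"
  shows "\<Phi> t (T X) $$ (i,j) = T (\<Phi> t X) $$ (i,j)"
proof -
  define g where "g s = (\<Sum>k<d. \<Sum>l<d. (\<Sum>m<d. \<Sum>n<d. \<Phi> s X $$ (m,n) * T (mat_unit d m n) $$ (k,l))
                          * \<Phi> (t - s) (mat_unit d k l) $$ (i,j))" for s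
  have TX: "T X \<in> carrier_mat d d"
    using T X by (rule linear_on_Md_carrier)
  have "g 0 = (\<Sum>k<d. \<Sum>l<d. T X $$ (k,l) * \<Phi> t (mat_unit d k l) $$ (i,j))"
    unfolding g_def using X by (intro sum.cong refl) (simp add: initial linear_on_Md_expand[OF T X])
  also have "\<dots> = \<Phi> t (T X) $$ (i,j)"
    using linear_on_Md_expand[OF linear TX ij] t by simp
  finally have g0: "g 0 = \<Phi> t (T X) $$ (i,j)" .
  have "g t = (\<Sum>k<d. \<Sum>l<d. T (\<Phi> t X) $$ (k,l) * mat_unit d k l $$ (i,j))"
    unfolding g_def using X t
    by (intro sum.cong refl) (simp add: initial linear_on_Md_expand[OF T semigroup_carrier[OF _ X]])
  also have "\<dots> = T (\<Phi> t X) $$ (i,j)"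
    using linear_on_Md_expand[OF linear_on_Md_id linear_on_Md_carrier[OF T semigroup_carrier[OF _ X]] ij] t by simp
  finally have gt: "g t = T (\<Phi> t X) $$ (i,j)" .
  have continuous_g: "continuous_on {0..t} g"
  proof -
    have "continuous_on {0..t} (\<lambda>s. \<Phi> s X $$ (m,n))" if "m < d" "n < d" for m n
      using continuous[OF X that] by (rule continuous_on_subset) auto
    moreover have "continuous_on {0..t} (\<lambda>s. \<Phi> (t - s) (mat_unit d k l) $$ (i,j))" for k l
      by (rule continuous_on_compose2[OF continuous[OF mat_unit_carrier ij]]) (auto intro!: continuous_intros)
    ultimately show ?thesis
      unfolding g_def by (intro continuous_intros) auto
  qed
  have derivative_g: "(g has_derivative (\<lambda>h. 0)) (at s within {0..t})" if "s \<in> {0..t} - {0, t}" for s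
  proof -
    have "(g has_vector_derivative 0) (at s)"
      unfolding g_def using that by (intro commuting_interpolation_has_derivative_zero[OF T commute _ _ X ij]) auto
    then show ?thesis
      by (simp add: has_vector_derivative_def has_derivative_at_withinI)
  qed
  have "g t = g 0"
    by (rule has_derivative_zero_unique_strong_interval[of "{0, t}", OF _ continuous_g refl derivative_g]) (use t in auto)
  then show ?thesis
    using g0 gt by simp
qed

lemma semigroup_commutes:
  assumes T: "linear_on_Md d T" and commute: "commutes_on d L T" and t: "0 \<le> t"
  shows "commutes_on d (\<Phi> t) T"
  unfolding commutes_on_def
proof
  fix X :: "complex mat" assume X: "X \<in> carrier_mat d d"
  have TX: "T X \<in> carrier_mat d d"
    using T X by (rule linear_on_Md_carrier)
  show "\<Phi> t (T X) = T (\<Phi> t X)"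
  proof (cases "t = 0")
    case True
    then show ?thesis
      using X TX by (simp add: initial)
  next
    case False
    then have "0 < t"
      using t by simp
    moreover have "\<Phi> t (T X) \<in> carrier_mat d d" "T (\<Phi> t X) \<in> carrier_mat d d"
      using t TX semigroup_carrier linear_on_Md_carrier[OF T semigroup_carrier[OF t X]] by auto
    ultimately show ?thesis
      by (intro eq_matI) (auto simp: semigroup_commutes_entry[OF T commute _ X])
  qed
qed

lemma semigroup_commutes_iff:
  assumes "linear_on_Md d T"
  shows "(\<forall>t\<ge>0. commutes_on d (\<Phi> t) T) \<longleftrightarrow> commutes_on d L T"
  using assms semigroup_commutes generator_commutes by auto

end

section \<open>Generators of Weyl-covariant semigroups\<close>

lemma weyl_coeff_identity:
  assumes d: "0 < d" and c: "c < d" and e: "e < d" and ce: "(c, e) \<noteq> (0, 0)"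
  shows "weyl_coeff d (\<lambda>X. X) c e = 0"
proof (cases "c = 0")
  case False
  have "residue d (int p + int c) \<noteq> p" if "p < d" for p
  proof
    assume "residue d (int p + int c) = p"
    then have "(int p + int c) mod int d = int p mod int d"
      using that by (simp add: residue_eq_nat_iff)
    then have "int d dvd int c"
      by (simp add: mod_eq_dvd_iff)
    then show False
      using False c by (auto dest: nat_dvd_not_less)
  qed
  then show ?thesis
    using d by (simp add: weyl_coeff_def)
next
  case True
  then have "\<not> int d dvd int e"
    using ce e by (auto simp: zdvd_not_zless)
  then have "(\<Sum>q<d. unity_root d (int q * int e)) = 0"
    using unity_root_sum[OF d, of "int e"] by simp
  then show ?thesis
    using True d by (simp add: weyl_coeff_def unity_root_diff algebra_simps sum_distrib_left[symmetric] sum_distrib_right[symmetric])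
qed

lemma Ad_weyl_residue:
  assumes d: "0 < d" and X: "X \<in> carrier_mat d d"
  shows "Ad (weyl d (residue d (- int c)) (residue d (- int e))) X = weyl_conj d (int c) (int e) X"
proof -
  have "Ad (weyl d (residue d (- int c)) (residue d (- int e))) X
      = weyl_conj d (- int (residue d (- int c))) (- int (residue d (- int e))) X"
    by (rule Ad_weyl[OF d X])
  also have "\<dots> = weyl_conj d (int c) (int e) X"
    using d by (intro weyl_conj_cong) (simp_all add: of_nat_residue mod_minus_eq)
  finally show ?thesis .
qed

lemma nonneg_comb_Ad_minus_id_imp_covariant:
  assumes d: "0 < d" and "nonneg_comb_Ad_minus_id d L"
  shows "weyl_conj_covariant d L"
proof -
  obtain n :: nat and c ab where L: "\<forall>X\<in>carrier_mat d d. L X = mat d d (\<lambda>(i,j). \<Sum>k<n. complex_of_real (c k) *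
      ((Ad (weyl d (fst (ab k)) (snd (ab k))) X - X) $$ (i,j)))"
    using assms(2) unfolding nonneg_comb_Ad_minus_id_def by fast
  show ?thesis
  proof (rule weyl_conj_covariant_sum[OF d, where w = "\<lambda>k. of_real (c k)" and \<beta> = 1
        and a = "\<lambda>k. - int (fst (ab k))" and b = "\<lambda>k. - int (snd (ab k))"])
    fix X :: "complex mat" assume X: "X \<in> carrier_mat d d"
    then show "L X = mat d d (\<lambda>(i,j). \<Sum>k<n. complex_of_real (c k) *
       (weyl_conj d (- int (fst (ab k))) (- int (snd (ab k))) X $$ (i,j) - 1 * X $$ (i,j)))"
      using L by (auto intro!: cong_mat sum.cong simp: Ad_weyl[OF d X])
  qed
qed

locale qds_generator =
  fixes d :: nat and \<Phi> :: "real \<Rightarrow> complex mat \<Rightarrow> complex mat" and L :: "complex mat \<Rightarrow> complex mat"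
  assumes positive_dim: "0 < d" and qds: "qds_unital d \<Phi>" and generates: "generator d \<Phi> L"

sublocale qds_generator \<subseteq> linear_semigroup
  using qds generates unfolding qds_unital_def unital_channel_def by unfold_locales blast+

context qds_generator
begin

lemma completely_positive: "0 \<le> t \<Longrightarrow> completely_positive d (\<Phi> t)"
  using qds by (simp add: qds_unital_def unital_channel_def)

lemma unital: "0 \<le> t \<Longrightarrow> \<Phi> t (1\<^sub>m d) = 1\<^sub>m d"
  using qds by (simp add: qds_unital_def unital_channel_def)

lemma generator_one_mat: "L (1\<^sub>m d) = 0\<^sub>m d d"
proof (rule eq_matI)
  fix i j assume "i < dim_row (0\<^sub>m d d :: complex mat)" "j < dim_col (0\<^sub>m d d :: complex mat)"
  then have ij: "i < d" "j < d" by auto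
  have "L (1\<^sub>m d) $$ (i,j) = 0"
    by (rule generator_entry_eqI[OF one_carrier_mat ij tendsto_const]) (simp add: unital)
  then show "L (1\<^sub>m d) $$ (i,j) = 0\<^sub>m d d $$ (i,j)"
    using ij by simp
qed (use generator_carrier[OF one_carrier_mat] in auto)

lemma tendsto_weyl_coeff_quotient:
  assumes c: "c < d" and e: "e < d" and ce: "(c, e) \<noteq> (0, 0)"
  shows "((\<lambda>h. weyl_coeff d (\<Phi> h) c e / of_real h) \<longlongrightarrow> weyl_coeff d L c e) (at_right 0)"
proof -
  let ?x = "\<lambda>p. residue d (int p + int c)" and ?\<omega> = "\<lambda>p q. unity_root d (int e * (int q - int p))"
  have "((\<lambda>h. \<Sum>p<d. \<Sum>q<d. ?\<omega> p q * ((\<Phi> h (mat_unit d p q) $$ (?x p, ?x q) - mat_unit d p q $$ (?x p, ?x q)) / of_real h))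
      \<longlongrightarrow> weyl_coeff d L c e) (at_right 0)"
    unfolding weyl_coeff_def using positive_dim by (intro tendsto_sum tendsto_mult_left tendsto_generator) auto
  moreover have "(\<Sum>p<d. \<Sum>q<d. ?\<omega> p q * ((\<Phi> h (mat_unit d p q) $$ (?x p, ?x q) - mat_unit d p q $$ (?x p, ?x q)) / of_real h))
      = weyl_coeff d (\<Phi> h) c e / of_real h" for h
    using weyl_coeff_identity[OF positive_dim c e ce]
    by (simp add: weyl_coeff_def sum_subtractf right_diff_distrib flip: sum_divide_distrib)
  ultimately show ?thesis
    by simp
qed

lemma weyl_coeff_generator_nonneg:
  assumes "c < d" and "e < d" and "(c, e) \<noteq> (0, 0)"
  shows "weyl_coeff d L c e \<in> \<real>\<^sub>\<ge>\<^sub>0"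
proof (rule Lim_in_closed_set[OF closed_nonneg_Reals_complex _ trivial_limit_at_right_real
      tendsto_weyl_coeff_quotient[OF assms]])
  show "\<forall>\<^sub>F h in at_right 0. weyl_coeff d (\<Phi> h) c e / of_real h \<in> \<real>\<^sub>\<ge>\<^sub>0"
    using eventually_at_right_less
    by (rule eventually_mono) (simp add: weyl_coeff_nonneg[OF positive_dim completely_positive])
qed

lemma covariant_generator_expansion:
  assumes covariant: "weyl_conj_covariant d L" and X: "X \<in> carrier_mat d d" and ij: "i < d" "j < d"
  shows "L X $$ (i,j) = (\<Sum>c<d. \<Sum>e<d. weyl_coeff d L c e / (of_nat d * of_nat d)
                           * (weyl_conj d (int c) (int e) X $$ (i,j) - X $$ (i,j)))"
proof -
  have total: "(\<Sum>c<d. \<Sum>e<d. weyl_coeff d L c e) = 0"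
    using weyl_coeff_sum[OF positive_dim linear_generator covariant] positive_dim by (simp add: generator_one_mat)
  have vanishing: "(\<Sum>c<d. \<Sum>e<d. weyl_coeff d L c e / (of_nat d * of_nat d) * X $$ (i,j)) = 0"
    by (simp add: total flip: sum_distrib_right sum_divide_distrib)
  have "L X $$ (i,j) = (\<Sum>c<d. \<Sum>e<d. weyl_coeff d L c e / (of_nat d * of_nat d) * weyl_conj d (int c) (int e) X $$ (i,j))"
    using covariant_expansion[OF positive_dim linear_generator covariant X] ij by simp
  also have "\<dots> = (\<Sum>c<d. \<Sum>e<d. weyl_coeff d L c e / (of_nat d * of_nat d)
                           * (weyl_conj d (int c) (int e) X $$ (i,j) - X $$ (i,j)))"
    by (simp only: right_diff_distrib sum_subtractf vanishing diff_zero)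
  finally show ?thesis .
qed

lemma covariant_generator_expansion_Ad:
  assumes covariant: "weyl_conj_covariant d L" and X: "X \<in> carrier_mat d d"
  shows "L X = mat d d (\<lambda>(i,j). \<Sum>k<d * d. weyl_coeff d L (k div d) (k mod d) / (of_nat d * of_nat d)
    * ((Ad (weyl d (residue d (- int (k div d))) (residue d (- int (k mod d)))) X - X) $$ (i,j)))"
proof (rule eq_matI)
  fix i j assume "i < dim_row (mat d d (\<lambda>(i,j). \<Sum>k<d * d. weyl_coeff d L (k div d) (k mod d) / (of_nat d * of_nat d)
    * ((Ad (weyl d (residue d (- int (k div d))) (residue d (- int (k mod d)))) X - X) $$ (i,j))))"
    "j < dim_col (mat d d (\<lambda>(i,j). \<Sum>k<d * d. weyl_coeff d L (k div d) (k mod d) / (of_nat d * of_nat d)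
    * ((Ad (weyl d (residue d (- int (k div d))) (residue d (- int (k mod d)))) X - X) $$ (i,j))))"
  then have ij: "i < d" "j < d" by auto
  have "(\<Sum>k<d * d. weyl_coeff d L (k div d) (k mod d) / (of_nat d * of_nat d)
          * ((Ad (weyl d (residue d (- int (k div d))) (residue d (- int (k mod d)))) X - X) $$ (i,j)))
      = (\<Sum>k<d * d. weyl_coeff d L (k div d) (k mod d) / (of_nat d * of_nat d)
          * (weyl_conj d (int (k div d)) (int (k mod d)) X $$ (i,j) - X $$ (i,j)))"
    using X ij by (intro sum.cong refl) (simp add: Ad_weyl_residue[OF positive_dim X])
  also have "\<dots> = (\<Sum>c<d. \<Sum>e<d. weyl_coeff d L c e / (of_nat d * of_nat d)
                           * (weyl_conj d (int c) (int e) X $$ (i,j) - X $$ (i,j)))"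
    by (rule sum_lessThan_square_div_mod)
  finally show "L X $$ (i,j) = mat d d (\<lambda>(i,j). \<Sum>k<d * d. weyl_coeff d L (k div d) (k mod d) / (of_nat d * of_nat d)
    * ((Ad (weyl d (residue d (- int (k div d))) (residue d (- int (k mod d)))) X - X) $$ (i,j))) $$ (i,j)"
    using ij by (simp add: covariant_generator_expansion[OF covariant X ij])
qed (use generator_carrier[OF X] in auto)

lemma covariant_imp_nonneg_comb_Ad_minus_id:
  assumes covariant: "weyl_conj_covariant d L"
  shows "nonneg_comb_Ad_minus_id d L"
proof -
  define w where "w k = (if k = 0 then 0 else Re (weyl_coeff d L (k div d) (k mod d)) / (real d * real d))" for k
  define ab where "ab k = (residue d (- int (k div d)), residue d (- int (k mod d)))" for k
  have div_mod: "k div d < d" "k mod d < d" if "k < d * d" for k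
    using that positive_dim by (simp_all add: less_mult_imp_div_less)
  have "(k div d, k mod d) \<noteq> (0, 0)" if "k \<noteq> 0" for k
    using that by (metis div_mult_mod_eq mult_zero_left add_0 prod.inject)
  then have coeff: "k \<noteq> 0 \<Longrightarrow> weyl_coeff d L (k div d) (k mod d) \<in> \<real>\<^sub>\<ge>\<^sub>0" if "k < d * d" for k
    using weyl_coeff_generator_nonneg div_mod[OF that] by blast
  show ?thesis
    unfolding nonneg_comb_Ad_minus_id_def
  proof (intro exI[of _ "d * d"] exI[of _ w] exI[of _ ab] conjI allI impI ballI)
    fix k assume "k < d * d"
    then show "0 \<le> w k" "fst (ab k) < d" "snd (ab k) < d"
      using coeff positive_dim by (auto simp: w_def ab_def complex_nonneg_Reals_iff)
  next
    fix X :: "complex mat" assume X: "X \<in> carrier_mat d d"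
    have identity: "Ad (weyl d (residue d 0) (residue d 0)) X = X"
      using Ad_weyl_residue[OF positive_dim X, of 0 0] X by simp
    have "of_real (w k) * (Ad (weyl d (fst (ab k)) (snd (ab k))) X - X) $$ (i,j)
        = weyl_coeff d L (k div d) (k mod d) / (of_nat d * of_nat d) * (Ad (weyl d (fst (ab k)) (snd (ab k))) X - X) $$ (i,j)"
      if "k < d * d" "i < d" "j < d" for k i j
      using coeff[OF that(1)] X that
      by (cases "k = 0") (auto simp: w_def ab_def identity complex_nonneg_Reals_iff complex_eq_iff)
    then show "L X = mat d d (\<lambda>(i,j). \<Sum>k<d * d. complex_of_real (w k) * ((Ad (weyl d (fst (ab k)) (snd (ab k))) X - X) $$ (i,j)))"
      unfolding covariant_generator_expansion_Ad[OF covariant X] by (intro cong_mat refl) (simp add: ab_def)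
  qed
qed

lemma nonneg_comb_Ad_minus_id_iff_covariant: "nonneg_comb_Ad_minus_id d L \<longleftrightarrow> weyl_conj_covariant d L"
  using nonneg_comb_Ad_minus_id_imp_covariant[OF positive_dim] covariant_imp_nonneg_comb_Ad_minus_id by blast

lemma semigroup_covariant_iff: "(\<forall>t\<ge>0. weyl_conj_covariant d (\<Phi> t)) \<longleftrightarrow> weyl_conj_covariant d L"
  using semigroup_commutes_iff[OF linear_weyl_conj] by (auto simp: weyl_conj_covariant_def)

lemma mixed_weyl_unitary_iff_covariant_generator:
  "(\<forall>t\<ge>0. mixed_weyl_unitary d (\<Phi> t)) \<longleftrightarrow> weyl_conj_covariant d L"
  using mixed_weyl_unitary_iff_covariant[OF positive_dim linear completely_positive unital] semigroup_covariant_iff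
  by simp

end

theorem theorem6p4:
  fixes d :: nat and \<Phi> :: "real \<Rightarrow> complex mat \<Rightarrow> complex mat" and L :: "complex mat \<Rightarrow> complex mat"
  assumes "0 < d"
    and "qds_unital d \<Phi>"
    and "generator d \<Phi> L"
  shows "((\<forall>t\<ge>0. mixed_weyl_unitary d (\<Phi> t)) \<longleftrightarrow> nonneg_comb_Ad_minus_id d L)
       \<and> (nonneg_comb_Ad_minus_id d L \<longleftrightarrow> weyl_covariant d L)"
proof -
  interpret qds_generator d \<Phi> L
    using assms by unfold_locales
  show ?thesis
    by (simp add: mixed_weyl_unitary_iff_covariant_generator nonneg_comb_Ad_minus_id_iff_covariant
        weyl_covariant_iff_weyl_conj_covariant[OF assms(1) generator_carrier])
qed

end
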